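(* Let $H$ be a Hilbert space and $(A_i)_{i\in I}$ a family of pairwise commuting compact operators on $H$ such that $\sum_{i\in I}A_i^*A_i=1$, with convergence in the strong operator topology. Then there is an orthogonal decomposition $H=H_{qn}\oplus H_{n}$ into closed subspaces, each invariant under all $A_i$, such that every restriction $A_i|_{H_n}$ is normal and every restriction $A_i|_{H_{qn}}$ is quasi-nilpotent.
   Context: An operator on a Banach space is quasi-nilpotent if its spectrum is $\{0\}$ (equivalently, its spectral radius is $0$). The sum over the (possibly infinite) index set $I$ is the strong limit of the net of finite partial sums. *)

theory Defs
  imports "HOL-Analysis.Analysis"
begin

text \<open>Convention: the inner product is conjugate-linear in the first argument.\<close>

class complex_vector = real_vector +
  fixes scaleC :: "complex \<Rightarrow> 'a \<Rightarrow> 'a" (infixr "*\<^sub>C" 75)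
  assumes scaleC_add_right: "scaleC a (x + y) = scaleC a x + scaleC a y"
    and scaleC_add_left: "scaleC (a + b) x = scaleC a x + scaleC b x"
    and scaleC_scaleC: "scaleC a (scaleC b x) = scaleC (a * b) x"
    and scaleC_one: "scaleC 1 x = x"
    and scaleR_scaleC: "scaleR r x = scaleC (complex_of_real r) x"

class complex_inner = complex_vector + real_normed_vector +
  fixes cinner :: "'a \<Rightarrow> 'a \<Rightarrow> complex"
  assumes cinner_commute: "cinner x y = cnj (cinner y x)"
    and cinner_add_left: "cinner (x + y) z = cinner x z + cinner y z"
    and cinner_scaleC_left: "cinner (scaleC r x) y = cnj r * cinner x y"
    and cinner_ge_zero: "0 \<le> Re (cinner x x)"
    and cinner_eq_zero_iff: "cinner x x = 0 \<longleftrightarrow> x = 0"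
    and norm_eq_sqrt_cinner: "norm x = sqrt (Re (cinner x x))"

class chilbert_space = complex_inner + complete_space

instantiation complex :: chilbert_space
begin
definition scaleC_complex :: "complex \<Rightarrow> complex \<Rightarrow> complex" where
  "scaleC_complex a x = a * x"
definition cinner_complex :: "complex \<Rightarrow> complex \<Rightarrow> complex" where
  "cinner_complex x y = cnj x * y"
instance
proof
  fix x y z a b :: complex and r :: real
  show "a *\<^sub>C (x + y) = a *\<^sub>C x + a *\<^sub>C y" by (simp add: scaleC_complex_def algebra_simps)
  show "(a + b) *\<^sub>C x = a *\<^sub>C x + b *\<^sub>C x" by (simp add: scaleC_complex_def algebra_simps)
  show "a *\<^sub>C b *\<^sub>C x = (a * b) *\<^sub>C x" by (simp add: scaleC_complex_def algebra_simps)
  show "1 *\<^sub>C x = x" by (simp add: scaleC_complex_def)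
  show "r *\<^sub>R x = complex_of_real r *\<^sub>C x" by (simp add: scaleC_complex_def scaleR_conv_of_real)
  show "cinner x y = cnj (cinner y x)" by (simp add: cinner_complex_def)
  show "cinner (x + y) z = cinner x z + cinner y z" by (simp add: cinner_complex_def algebra_simps)
  show "cinner (a *\<^sub>C x) y = cnj a * cinner x y" by (simp add: cinner_complex_def scaleC_complex_def)
  show "0 \<le> Re (cinner x x)" by (simp add: cinner_complex_def)
  show "(cinner x x = 0) = (x = 0)" by (simp add: cinner_complex_def)
  show "norm x = sqrt (Re (cinner x x))"
    by (simp add: cinner_complex_def cmod_def power2_eq_square)
qed
end

definition bounded_clinear :: "('a::complex_inner \<Rightarrow> 'b::complex_inner) \<Rightarrow> bool" where
  "bounded_clinear T \<longleftrightarrow> bounded_linear T \<and> (\<forall>c x. T (c *\<^sub>C x) = c *\<^sub>C T x)"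

definition compact_op :: "('a::chilbert_space \<Rightarrow> 'a) \<Rightarrow> bool" where
  "compact_op T \<longleftrightarrow> bounded_clinear T \<and> compact (closure (T ` cball 0 1))"

definition adjoint :: "('a::chilbert_space \<Rightarrow> 'a) \<Rightarrow> 'a \<Rightarrow> 'a" where
  "adjoint T = (THE B. \<forall>x y. cinner (T x) y = cinner x (B y))"

definition csubspace :: "'a::complex_vector set \<Rightarrow> bool" where
  "csubspace S \<longleftrightarrow> 0 \<in> S \<and> (\<forall>x\<in>S. \<forall>y\<in>S. x + y \<in> S) \<and> (\<forall>c. \<forall>x\<in>S. c *\<^sub>C x \<in> S)"

definition closed_csubspace :: "'a::chilbert_space set \<Rightarrow> bool" where
  "closed_csubspace S \<longleftrightarrow> csubspace S \<and> closed S"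

definition normal_on :: "'a::chilbert_space set \<Rightarrow> ('a \<Rightarrow> 'a) \<Rightarrow> bool" where
  "normal_on S T \<longleftrightarrow> (\<exists>B. B ` S \<subseteq> S \<and> (\<forall>x\<in>S. \<forall>y\<in>S. cinner (T x) y = cinner x (B y))
                         \<and> (\<forall>x\<in>S. T (B x) = B (T x)))"

text \<open>Spectrum of the restriction of T to an invariant closed subspace S
  (lambda is in the resolvent iff T - lambda is a bijection of S; the inverse is then
  automatically bounded by the open mapping theorem).\<close>
definition spectrum_on :: "'a::chilbert_space set \<Rightarrow> ('a \<Rightarrow> 'a) \<Rightarrow> complex set" where
  "spectrum_on S T = {l. \<not> bij_betw (\<lambda>x. T x - l *\<^sub>C x) S S}"

text \<open>Quasi-nilpotent restriction: spectrum contained in {0} (equal to {0} whenever S is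
  nonzero, since spectra on nonzero complex Banach spaces are nonempty).\<close>
definition quasinilpotent_on :: "'a::chilbert_space set \<Rightarrow> ('a \<Rightarrow> 'a) \<Rightarrow> bool" where
  "quasinilpotent_on S T \<longleftrightarrow> spectrum_on S T \<subseteq> {0}"

end

theory Submission
  imports Defs "HOL-Computational_Algebra.Fundamental_Theorem_Algebra"
begin

text \<open>
  Let H_n be the closed span of the joint eigenvectors of the family and H_qn its orthogonal
  complement. Using sum_i A_i^* A_i = 1 and commutativity, a joint eigenvector of the A_i with
  eigenvalues l_i is also a joint eigenvector of the A_i^*, with eigenvalues cnj l_i. Hence both
  subspaces are invariant, and A_i commutes with A_i^* on the joint eigenvectors, hence on H_n.
  On H_qn, an eigenvalue mu \<noteq> 0 of a compact A_i would have a finite-dimensional eigenspace,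
  invariant under the commuting family and therefore containing a joint eigenvector, which is
  impossible. So each A_i - mu is injective on H_qn, and by the Fredholm alternative for compact
  operators it is also surjective.
\<close>

section \<open>Complex inner product spaces\<close>

lemma scaleC_zero_left [simp]: "(0::complex) *\<^sub>C (x::'a::complex_vector) = 0"
proof -
  have "0 *\<^sub>C x = 0 *\<^sub>C x + 0 *\<^sub>C x"
    by (simp flip: scaleC_add_left)
  then show ?thesis by simp
qed

lemma scaleC_zero_right [simp]: "a *\<^sub>C (0::'a::complex_vector) = 0"
proof -
  have "a *\<^sub>C (0::'a) = a *\<^sub>C 0 + a *\<^sub>C 0"
    by (simp flip: scaleC_add_right)
  then show ?thesis by simp
qed

lemma scaleC_minus_left: "(- a) *\<^sub>C (x::'a::complex_vector) = - (a *\<^sub>C x)"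
proof -
  have "(- a) *\<^sub>C x + a *\<^sub>C x = 0" by (simp flip: scaleC_add_left)
  then show ?thesis by (simp add: eq_neg_iff_add_eq_0)
qed

lemma scaleC_minus_right: "a *\<^sub>C (- x::'a::complex_vector) = - (a *\<^sub>C x)"
proof -
  have "a *\<^sub>C (- x) + a *\<^sub>C x = 0" by (simp flip: scaleC_add_right)
  then show ?thesis by (simp add: eq_neg_iff_add_eq_0)
qed

lemma scaleC_diff_right: "a *\<^sub>C (x - y::'a::complex_vector) = a *\<^sub>C x - a *\<^sub>C y"
  by (metis diff_conv_add_uminus scaleC_add_right scaleC_minus_right)

lemma scaleC_sum_right: "a *\<^sub>C (\<Sum>i\<in>S. f i) = (\<Sum>i\<in>S. a *\<^sub>C (f i::'a::complex_vector))"
  by (induction S rule: infinite_finite_induct) (auto simp: scaleC_add_right)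

lemma scaleC_eq_0_imp: "a *\<^sub>C (v::'a::complex_vector) = 0 \<Longrightarrow> a \<noteq> 0 \<Longrightarrow> v = 0"
  by (metis left_inverse scaleC_one scaleC_scaleC scaleC_zero_right)

interpretation cvs: Vector_Spaces.vector_space "scaleC :: complex \<Rightarrow> 'a::complex_vector \<Rightarrow> 'a"
  by unfold_locales (simp_all add: scaleC_add_right scaleC_add_left scaleC_scaleC scaleC_one)

declare cinner_eq_zero_iff [simp]

lemma cinner_add_right: "cinner x (y + z) = cinner x y + cinner x z"
  by (metis cinner_add_left cinner_commute complex_cnj_add)

lemma cinner_scaleC_right: "cinner x (c *\<^sub>C y) = c * cinner x y"
  by (metis cinner_commute cinner_scaleC_left complex_cnj_cnj complex_cnj_mult)

lemma cinner_zero_left [simp]: "cinner 0 x = 0"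
  using cinner_add_left[of 0 0 x] by simp

lemma cinner_zero_right [simp]: "cinner x 0 = 0"
  by (subst cinner_commute) simp

lemma cinner_minus_left: "cinner (- x) y = - cinner x y"
  using cinner_add_left[of "- x" x y] by (simp add: eq_neg_iff_add_eq_0)

lemma cinner_minus_right: "cinner x (- y) = - cinner x y"
  by (metis cinner_commute cinner_minus_left complex_cnj_minus)

lemma cinner_diff_left: "cinner (x - y) z = cinner x z - cinner y z"
  unfolding diff_conv_add_uminus by (simp only: cinner_add_left cinner_minus_left)

lemma cinner_diff_right: "cinner x (y - z) = cinner x y - cinner x z"
  unfolding diff_conv_add_uminus by (simp only: cinner_add_right cinner_minus_right)

lemma cinner_scaleR_left: "cinner (r *\<^sub>R x) y = of_real r * cinner x y"
  by (simp add: scaleR_scaleC cinner_scaleC_left)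

lemma cinner_scaleR_right: "cinner x (r *\<^sub>R y) = of_real r * cinner x y"
  by (simp add: scaleR_scaleC cinner_scaleC_right)

lemma cinner_sum_right: "cinner y (\<Sum>i\<in>S. f i) = (\<Sum>i\<in>S. cinner y (f i))"
  by (induction S rule: infinite_finite_induct) (auto simp: cinner_add_right)

lemma cinner_zero_commute: "cinner x y = 0 \<longleftrightarrow> cinner y x = 0"
  by (metis cinner_commute complex_cnj_zero_iff)

lemma Re_cinner_commute: "Re (cinner y x) = Re (cinner x y)"
  by (subst cinner_commute) simp

lemma power2_norm_eq_cinner: "(norm x)^2 = Re (cinner x x)"
  by (simp add: norm_eq_sqrt_cinner cinner_ge_zero)

lemma cinner_self_eq_power2_norm: "cinner x x = complex_of_real ((norm x)^2)"
proof -
  have "Im (cinner x x) = 0"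
    using cinner_commute[of x x] by (metis cnj.simps(2) neg_equal_zero)
  then show ?thesis by (simp add: power2_norm_eq_cinner complex_eq_iff)
qed

lemma power2_norm_add: "(norm (x + y))^2 = (norm x)^2 + 2 * Re (cinner x y) + (norm y)^2"
  by (simp add: power2_norm_eq_cinner cinner_add_left cinner_add_right Re_cinner_commute[of x y])

lemma power2_norm_diff: "(norm (x - y))^2 = (norm x)^2 - 2 * Re (cinner x y) + (norm y)^2"
  using power2_norm_add[of x "-y"] by (simp add: cinner_minus_right)

lemma norm_add_Pythagorean_cinner: "cinner x y = 0 \<Longrightarrow> (norm (x + y))^2 = (norm x)^2 + (norm y)^2"
  by (simp add: power2_norm_add)

lemma parallelogram_law:
  "(norm (u + v))^2 + (norm (u - v))^2 = 2 * (norm u)^2 + 2 * (norm (v::'a::complex_inner))^2"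
  by (simp add: power2_norm_add power2_norm_diff)

lemma norm_scaleC: "norm (c *\<^sub>C (x::'a::complex_inner)) = cmod c * norm x"
proof -
  have "cinner (c *\<^sub>C x) (c *\<^sub>C x) = (cnj c * c) * cinner x x"
    by (simp add: cinner_scaleC_left cinner_scaleC_right)
  also have "cnj c * c = complex_of_real ((cmod c)^2)"
    using complex_norm_square[of c] by (simp add: mult.commute)
  finally have "complex_of_real ((norm (c *\<^sub>C x))^2) = complex_of_real ((cmod c * norm x)^2)"
    by (simp only: cinner_self_eq_power2_norm power_mult_distrib of_real_mult)
  then have "(norm (c *\<^sub>C x))^2 = (cmod c * norm x)^2" by (simp only: of_real_eq_iff)
  then show ?thesis by (simp add: power2_eq_iff_nonneg)
qed

lemma Re_cinner_le: "Re (cinner x y) \<le> norm x * norm y"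
proof -
  have "4 * Re (cinner x y) = (norm (x + y))^2 - (norm (x - y))^2"
    by (simp add: power2_norm_add power2_norm_diff)
  also have "\<dots> \<le> (norm x + norm y)^2 - (norm x - norm y)^2"
  proof -
    have "(norm (x + y))^2 \<le> (norm x + norm y)^2"
      by (simp add: norm_triangle_ineq power_mono)
    moreover have "\<bar>norm x - norm y\<bar>^2 \<le> (norm (x - y))^2"
      by (meson abs_ge_zero norm_triangle_ineq3 power_mono)
    ultimately show ?thesis by (simp only: power2_abs)
  qed
  also have "\<dots> = 4 * (norm x * norm y)" by (simp add: power2_eq_square algebra_simps)
  finally show ?thesis by simp
qed

lemma cinner_Cauchy_Schwarz: "cmod (cinner x y) \<le> norm x * norm y"
proof (cases "cinner x y = 0")
  case False
  define c where "c = cnj (sgn (cinner x y))"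
  have "c * cinner x y = (cnj (cinner x y) * cinner x y) / complex_of_real (cmod (cinner x y))"
    by (simp add: c_def sgn_eq)
  also have "cnj (cinner x y) * cinner x y = complex_of_real (cmod (cinner x y))^2"
    using complex_norm_square[of "cinner x y"] by (simp add: mult.commute)
  finally have "cmod (cinner x y) = Re (cinner x (c *\<^sub>C y))"
    using False by (simp add: cinner_scaleC_right power2_eq_square)
  also have "\<dots> \<le> norm x * norm (c *\<^sub>C y)" by (rule Re_cinner_le)
  also have "norm (c *\<^sub>C y) = norm y"
    using False by (simp add: norm_scaleC c_def norm_sgn)
  finally show ?thesis .
qed simp

section \<open>Bounded complex-linear operators and closed subspaces\<close>

abbreviation clinear :: "('a::complex_vector \<Rightarrow> 'b::complex_vector) \<Rightarrow> bool" where
  "clinear \<equiv> module_hom (*\<^sub>C) (*\<^sub>C)"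

lemma bounded_clinear_clinear: "bounded_clinear T \<Longrightarrow> clinear T"
  unfolding bounded_clinear_def by unfold_locales (simp_all add: linear_simps)

lemmas bounded_clinear_add = module_hom.add[OF bounded_clinear_clinear]
  and bounded_clinear_diff = module_hom.diff[OF bounded_clinear_clinear]
  and bounded_clinear_zero = module_hom.zero[OF bounded_clinear_clinear]
  and bounded_clinear_scaleC = module_hom.scale[OF bounded_clinear_clinear]

lemma bounded_clinear_bounded_linear: "bounded_clinear T \<Longrightarrow> bounded_linear T"
  by (simp add: bounded_clinear_def)

lemma bounded_clinear_continuous_on: "bounded_clinear T \<Longrightarrow> continuous_on S T"
  by (simp add: bounded_clinear_def linear_continuous_on)

lemma bounded_clinear_tendsto:
  "bounded_clinear T \<Longrightarrow> (f \<longlongrightarrow> l) F \<Longrightarrow> ((\<lambda>n. T (f n)) \<longlongrightarrow> T l) F"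
  by (simp add: bounded_clinear_def bounded_linear.tendsto)

lemma bounded_clinear_compose:
  "bounded_clinear P \<Longrightarrow> bounded_clinear Q \<Longrightarrow> bounded_clinear (\<lambda>x. P (Q x))"
  unfolding bounded_clinear_def using bounded_linear_compose[of P Q] by auto

lemma bounded_clinear_scaleC_const: "bounded_clinear (\<lambda>v::'a::complex_inner. c *\<^sub>C v)"
proof -
  have "bounded_linear (\<lambda>v::'a. c *\<^sub>C v)"
    by (rule bounded_linear_intro[where K = "cmod c"])
      (auto simp: scaleC_add_right scaleR_scaleC scaleC_scaleC mult.commute norm_scaleC)
  then show ?thesis unfolding bounded_clinear_def by (simp add: scaleC_scaleC mult.commute)
qed

lemma bounded_clinear_sub:
  "bounded_clinear P \<Longrightarrow> bounded_clinear Q \<Longrightarrow> bounded_clinear (\<lambda>x. P x - Q x)"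
  unfolding bounded_clinear_def by (auto intro: bounded_linear_sub simp: scaleC_diff_right)

lemma bounded_linear_cinner_right: "bounded_linear (cinner y)"
  by (rule bounded_linear_intro[where K = "norm y"])
    (auto simp: cinner_add_right cinner_scaleR_right scaleR_conv_of_real mult.commute
      intro: order_trans[OF cinner_Cauchy_Schwarz])

lemma bounded_linear_cinner_left: "bounded_linear (\<lambda>x. cinner x y)"
  by (rule bounded_linear_intro[where K = "norm y"])
    (auto simp: cinner_add_left cinner_scaleR_left scaleR_conv_of_real
      intro: order_trans[OF cinner_Cauchy_Schwarz])

lemma cinner_ext: "(\<And>x. cinner x a = cinner x b) \<Longrightarrow> a = b"
  by (metis cinner_diff_right cinner_eq_zero_iff eq_iff_diff_eq_0)

lemma closed_cinner_zero_right: "closed {x. cinner y x = 0}"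
  by (rule closed_Collect_eq)
    (simp_all add: bounded_linear_cinner_right linear_continuous_on continuous_on_const)

lemma csubspace_0: "csubspace M \<Longrightarrow> 0 \<in> M"
  by (simp add: csubspace_def)

lemma csubspace_add: "csubspace M \<Longrightarrow> x \<in> M \<Longrightarrow> y \<in> M \<Longrightarrow> x + y \<in> M"
  by (simp add: csubspace_def)

lemma csubspace_scaleC: "csubspace M \<Longrightarrow> x \<in> M \<Longrightarrow> c *\<^sub>C x \<in> M"
  by (simp add: csubspace_def)

lemma csubspace_scaleR: "csubspace M \<Longrightarrow> x \<in> M \<Longrightarrow> r *\<^sub>R x \<in> M"
  by (simp add: csubspace_def scaleR_scaleC)

lemma csubspace_diff: "csubspace M \<Longrightarrow> x \<in> M \<Longrightarrow> y \<in> M \<Longrightarrow> x - y \<in> M"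
  unfolding csubspace_def by (metis diff_conv_add_uminus scaleC_minus_left scaleC_one)

lemma csubspace_sum:
  "csubspace W \<Longrightarrow> (\<And>k. k \<in> S \<Longrightarrow> f k \<in> W) \<Longrightarrow> (\<Sum>k\<in>S. f k) \<in> W"
  by (induction S rule: infinite_finite_induct) (auto simp: csubspace_0 csubspace_add)

lemma csubspace_iff_subspace: "csubspace W \<longleftrightarrow> cvs.subspace W"
  by (simp add: csubspace_def cvs.subspace_def)

lemma closed_csubspace_Inter:
  "(\<And>S. S \<in> F \<Longrightarrow> closed_csubspace S) \<Longrightarrow> closed_csubspace (\<Inter>F)"
  unfolding closed_csubspace_def csubspace_def by (auto intro: closed_Inter)

lemma closed_csubspace_orthogonal: "closed_csubspace {y. \<forall>g\<in>G. cinner g y = 0}"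
proof -
  have "{y. \<forall>g\<in>G. cinner g y = 0} = (\<Inter>g\<in>G. {y. cinner g y = 0})" by auto
  then show ?thesis
    unfolding closed_csubspace_def csubspace_def
    by (simp add: closed_INT closed_cinner_zero_right cinner_add_right cinner_scaleC_right)
qed

lemma closed_csubspace_vimage:
  assumes T: "bounded_clinear T" and S: "closed_csubspace S"
  shows "closed_csubspace {x. T x \<in> S}"
proof -
  have "closed {x. T x \<in> S}"
    using continuous_closed_vimage[of S T] S bounded_clinear_continuous_on[OF T, of UNIV]
    by (simp add: closed_csubspace_def vimage_def continuous_on_eq_continuous_at)
  moreover have "csubspace {x. T x \<in> S}"
    using S T unfolding closed_csubspace_def csubspace_def
    by (simp add: bounded_clinear_add bounded_clinear_zero bounded_clinear_scaleC)
  ultimately show ?thesis by (simp add: closed_csubspace_def)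
qed

lemma closed_csubspace_equalizer:
  assumes P: "bounded_clinear P" and Q: "bounded_clinear Q"
  shows "closed_csubspace {x. P x = Q x}"
proof -
  have "closed {x. P x = Q x}"
    by (rule closed_Collect_eq) (simp_all add: bounded_clinear_continuous_on P Q)
  moreover have "csubspace {x. P x = Q x}"
    using P Q unfolding csubspace_def
    by (simp add: bounded_clinear_add bounded_clinear_zero bounded_clinear_scaleC)
  ultimately show ?thesis by (simp add: closed_csubspace_def)
qed

section \<open>Orthogonal projection, Riesz representation and adjoints\<close>

lemma nearest_point_orthogonal:
  fixes M :: "'a::complex_inner set"
  assumes M: "csubspace M" and p: "p \<in> M" and m: "m \<in> M"
    and nearest: "\<And>m. m \<in> M \<Longrightarrow> norm (z - p) \<le> norm (z - m)"
  shows "cinner m (z - p) = 0"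
proof (rule ccontr)
  assume g0: "cinner m (z - p) \<noteq> 0"
  define g where "g = cinner m (z - p)"
  define r where "r = (norm m)^2"
  have r0: "r > 0" using g0 by (auto simp: r_def)
  define t where "t = g / complex_of_real r"
  have "Re (cinner (z - p) (t *\<^sub>C m)) = (cmod g)^2 / r"
  proof -
    have "cinner (z - p) (t *\<^sub>C m) = t * cnj g"
      by (simp add: cinner_scaleC_right g_def flip: cinner_commute)
    also have "\<dots> = complex_of_real ((cmod g)^2 / r)"
      using complex_norm_square[of g] by (simp add: t_def)
    finally show ?thesis by simp
  qed
  moreover have "(norm (t *\<^sub>C m))^2 = (cmod g)^2 / r"
  proof -
    have "(norm (t *\<^sub>C m))^2 = (cmod g / r)^2 * (norm m * norm m)"
      using r0 by (simp add: norm_scaleC t_def norm_divide power_mult_distrib power2_eq_square)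
    also have "\<dots> = (cmod g)^2 / r" using r0 by (simp add: r_def power2_eq_square)
    finally show ?thesis .
  qed
  ultimately have "(norm ((z - p) - t *\<^sub>C m))^2 = (norm (z - p))^2 - (cmod g)^2 / r"
    by (simp add: power2_norm_diff)
  also have "\<dots> < (norm (z - p))^2"
    using g0 r0 by (simp add: g_def)
  finally have "norm (z - (p + t *\<^sub>C m)) < norm (z - p)"
    by (simp add: diff_diff_eq power_less_imp_less_base)
  moreover have "p + t *\<^sub>C m \<in> M" using M p m by (simp add: csubspace_add csubspace_scaleC)
  ultimately show False using nearest by fastforce
qed

text \<open>Parallelogram law for z - m and z - m', whose midpoint lies in M.\<close>

lemma csubspace_near_points_close:
  fixes M :: "'a::complex_inner set"
  assumes M: "csubspace M" and m: "m \<in> M" "m' \<in> M"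
  shows "(norm (m - m'))^2 \<le> 2 * (norm (z - m))^2 + 2 * (norm (z - m'))^2 - 4 * (infdist z M)^2"
proof -
  define w where "w = (1/2::real) *\<^sub>R (m + m')"
  have "w \<in> M" using m M by (simp add: w_def csubspace_scaleR csubspace_add)
  then have "infdist z M \<le> norm (z - w)" by (metis dist_norm infdist_le)
  then have "(infdist z M)^2 \<le> (norm (z - w))^2" by (simp add: infdist_nonneg power_mono)
  moreover have "(z - m) + (z - m') = 2 *\<^sub>R (z - w)" and "(z - m) - (z - m') = m' - m"
    by (simp_all add: w_def algebra_simps scaleR_2)
  ultimately show ?thesis
    using parallelogram_law[of "z - m" "z - m'"]
    by (simp add: power_mult_distrib norm_minus_commute)
qed

lemma infdist_minimizing_sequence:
  fixes M :: "'a::real_normed_vector set"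
  assumes "M \<noteq> {}"
  obtains ms where "\<And>n. ms n \<in> M" "\<And>n. (norm (z - ms n))^2 < (infdist z M)^2 + 1 / Suc n"
proof -
  have "\<exists>m\<in>M. (norm (z - m))^2 < (infdist z M)^2 + 1 / Suc n" for n
  proof -
    define r where "r = sqrt ((infdist z M)^2 + 1 / Suc n)"
    have "infdist z M < r" unfolding r_def by (intro real_less_rsqrt) simp
    then have "(INF m\<in>M. dist z m) < r" using assms by (simp add: infdist_notempty)
    then obtain m where "m \<in> M" "dist z m < r"
      using assms by (subst (asm) cINF_less_iff) (auto intro: bdd_belowI2[where m=0])
    moreover have "(norm (z - m))^2 < r^2" if "norm (z - m) < r"
      using that by (intro power_strict_mono) auto
    ultimately show ?thesis by (auto simp: dist_norm r_def)
  qed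
  then obtain ms where "\<And>n. ms n \<in> M" "\<And>n. (norm (z - ms n))^2 < (infdist z M)^2 + 1 / Suc n"
    by metis
  then show ?thesis by (rule that)
qed

lemma closed_csubspace_nearest_point:
  fixes M :: "'a::chilbert_space set"
  assumes M: "closed_csubspace M"
  obtains p where "p \<in> M" "\<And>m. m \<in> M \<Longrightarrow> norm (z - p) \<le> norm (z - m)"
proof -
  have Ms: "csubspace M" and Mc: "closed M" using M by (auto simp: closed_csubspace_def)
  define d where "d = infdist z M"
  have d0: "d \<ge> 0" by (simp add: d_def infdist_nonneg)
  have dle: "d \<le> norm (z - m)" if "m \<in> M" for m
    by (metis that d_def dist_norm infdist_le)
  obtain ms where ms: "\<And>n. ms n \<in> M" "\<And>n. (norm (z - ms n))^2 < d^2 + 1 / Suc n"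
    using infdist_minimizing_sequence[of M z] csubspace_0[OF Ms] unfolding d_def by blast
  have close: "(norm (ms a - ms b))^2 \<le> 2 / Suc a + 2 / Suc b" for a b
    using csubspace_near_points_close[OF Ms ms(1)[of a] ms(1)[of b], of z] ms(2)[of a] ms(2)[of b]
    by (simp add: d_def)
  have "Cauchy ms"
  proof (rule metric_CauchyI)
    fix e :: real assume "e > 0"
    then obtain N where N: "N > 0" "inverse (real N) < e^2 / 4"
      using ex_inverse_of_nat_less[of "e^2 / 4"] by auto
    have "dist (ms a) (ms b) < e" if "a \<ge> N" "b \<ge> N" for a b
    proof -
      have "2 / Suc a \<le> 2 / N" "2 / Suc b \<le> 2 / N"
        using that N(1) by (simp_all add: frac_le)
      then have "2 / Suc a + 2 / Suc b \<le> 4 / N" by simp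
      then have "(norm (ms a - ms b))^2 < e^2"
        using close[of a b] N(2) by (simp add: field_simps)
      then show ?thesis using \<open>e > 0\<close> by (simp add: dist_norm power_less_imp_less_base)
    qed
    then show "\<exists>N. \<forall>a\<ge>N. \<forall>b\<ge>N. dist (ms a) (ms b) < e" by blast
  qed
  then obtain p where lim: "ms \<longlonglongrightarrow> p" using Cauchy_convergent_iff convergent_def by blast
  have "p \<in> M" using Mc ms(1) lim closed_sequentially by blast
  have "(\<lambda>n. (norm (z - ms n))^2) \<longlonglongrightarrow> (norm (z - p))^2"
    by (intro tendsto_intros lim)
  moreover have "(\<lambda>n. d^2 + 1 / Suc n) \<longlonglongrightarrow> d^2"
    using LIMSEQ_inverse_real_of_nat_add[of "d^2"] by (simp add: inverse_eq_divide add.commute)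
  moreover have "\<exists>N. \<forall>n\<ge>N. (norm (z - ms n))^2 \<le> d^2 + 1 / Suc n"
    by (meson ms(2) less_imp_le)
  ultimately have "(norm (z - p))^2 \<le> d^2"
    by (rule LIMSEQ_le)
  then have "norm (z - p) \<le> d" by (rule power2_le_imp_le[OF _ d0])
  then show ?thesis using that \<open>p \<in> M\<close> dle by force
qed

lemma orthogonal_projection_exists:
  fixes M :: "'a::chilbert_space set"
  assumes "closed_csubspace M"
  obtains p where "p \<in> M" "\<And>m. m \<in> M \<Longrightarrow> cinner m (z - p) = 0"
  using closed_csubspace_nearest_point[OF assms] nearest_point_orthogonal assms
  by (metis closed_csubspace_def)

lemma Riesz_representation:
  fixes f :: "'a::chilbert_space \<Rightarrow> complex"
  assumes bl: "bounded_linear f" and hom: "\<And>c x. f (c *\<^sub>C x) = c * f x"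
  obtains w where "\<And>x. f x = cinner w x"
proof (cases "\<forall>x. f x = 0")
  case True
  then show ?thesis using that[of 0] by simp
next
  case False
  then obtain u where fu: "f u \<noteq> 0" by blast
  define N where "N = {x. f x = 0}"
  have "closed_csubspace N"
    unfolding N_def closed_csubspace_def csubspace_def using bl hom
    by (auto simp: linear_simps intro: closed_Collect_eq linear_continuous_on)
  then obtain p where pN: "p \<in> N" and orth: "\<And>m. m \<in> N \<Longrightarrow> cinner m (u - p) = 0"
    using orthogonal_projection_exists[of N u] by blast
  define q where "q = u - p"
  have fq: "f q = f u" using pN bl by (simp add: q_def N_def linear_simps)
  then have cq: "cinner q q \<noteq> 0" using fu bl by (auto simp: linear_simps)
  \<comment> \<open>q spans the orthogonal complement of the kernel of f\<close>
  have "f x = cinner (cnj (f q / cinner q q) *\<^sub>C q) x" for x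
  proof -
    have "f (f x *\<^sub>C q - f q *\<^sub>C x) = 0" using bl hom by (simp add: linear_simps)
    then have "cinner (f x *\<^sub>C q - f q *\<^sub>C x) q = 0"
      using orth by (simp add: N_def q_def)
    then have "cinner q (f x *\<^sub>C q - f q *\<^sub>C x) = 0"
      by (metis cinner_zero_commute)
    then have "f x * cinner q q = f q * cinner q x"
      by (simp add: cinner_diff_right cinner_scaleC_right)
    then show ?thesis using cq by (simp add: cinner_scaleC_left field_simps)
  qed
  then show ?thesis by (rule that)
qed

lemma adjoint_exists:
  fixes T :: "'a::chilbert_space \<Rightarrow> 'a"
  assumes T: "bounded_clinear T"
  obtains B where "\<And>x y. cinner (T x) y = cinner x (B y)"
proof -
  have "\<exists>w. \<forall>x. cinner y (T x) = cinner w x" for y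
  proof -
    have "bounded_linear (\<lambda>x. cinner y (T x))"
      using bounded_linear_compose[OF bounded_linear_cinner_right bounded_clinear_bounded_linear[OF T]] .
    moreover have "cinner y (T (c *\<^sub>C x)) = c * cinner y (T x)" for c x
      using T by (simp add: bounded_clinear_scaleC cinner_scaleC_right)
    ultimately show ?thesis by (metis Riesz_representation)
  qed
  then obtain B where "\<And>y x. cinner y (T x) = cinner (B y) x" by metis
  then show ?thesis by (metis that cinner_commute)
qed

lemma cinner_adjoint:
  fixes T :: "'a::chilbert_space \<Rightarrow> 'a"
  assumes T: "bounded_clinear T"
  shows "cinner (T x) y = cinner x (adjoint T y)"
proof -
  obtain B where B: "\<And>x y. cinner (T x) y = cinner x (B y)" using adjoint_exists[OF T] by blast
  have "adjoint T = B" unfolding adjoint_def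
  proof (rule the_equality)
    fix B' assume "\<forall>x y. cinner (T x) y = cinner x (B' y)"
    then show "B' = B" by (metis B cinner_ext ext)
  qed (simp add: B)
  then show ?thesis by (simp add: B)
qed

lemma adjoint_cinner:
  fixes T :: "'a::chilbert_space \<Rightarrow> 'a"
  assumes T: "bounded_clinear T"
  shows "cinner (adjoint T y) x = cinner y (T x)"
  by (metis T cinner_adjoint cinner_commute)

lemma bounded_clinear_adjoint:
  fixes T :: "'a::chilbert_space \<Rightarrow> 'a"
  assumes T: "bounded_clinear T"
  shows "bounded_clinear (adjoint T)"
proof -
  let ?B = "adjoint T"
  have add: "?B (x + y) = ?B x + ?B y" for x y
    by (rule cinner_ext) (simp add: cinner_adjoint[OF T, symmetric] cinner_add_right)
  have scale: "?B (c *\<^sub>C x) = c *\<^sub>C ?B x" for c x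
    by (rule cinner_ext) (simp add: cinner_adjoint[OF T, symmetric] cinner_scaleC_right)
  obtain K where K: "K > 0" "\<And>x. norm (T x) \<le> norm x * K"
    using T bounded_linear.pos_bounded unfolding bounded_clinear_def by blast
  have "norm (?B y) \<le> norm y * K" for y
  proof -
    have "(norm (?B y))^2 = Re (cinner (T (?B y)) y)"
      by (simp add: cinner_adjoint[OF T] power2_norm_eq_cinner)
    also have "\<dots> \<le> norm (T (?B y)) * norm y" by (rule Re_cinner_le)
    also have "\<dots> \<le> norm (?B y) * K * norm y" using K by (simp add: mult_right_mono)
    finally have "(norm (?B y))^2 \<le> norm (?B y) * (norm y * K)" by (simp add: mult_ac)
    then show ?thesis
      using K(1) by (cases "norm (?B y) = 0") (auto simp: power2_eq_square)
  qed
  then have "bounded_linear ?B"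
    by (intro bounded_linear_intro[where K = K]) (auto simp: add scaleR_scaleC scale)
  then show ?thesis unfolding bounded_clinear_def using scale by blast
qed

section \<open>Compact operators\<close>

lemma compact_op_bounded_clinear: "compact_op T \<Longrightarrow> bounded_clinear T"
  by (simp add: compact_op_def)

lemma compact_op_image_unit_ball:
  "compact_op T \<Longrightarrow> norm x \<le> 1 \<Longrightarrow> T x \<in> closure (T ` cball 0 1)"
  using closure_subset by (fastforce simp: dist_norm)

lemma compact_separated_card_bound:
  fixes C :: "'a::metric_space set"
  assumes C: "compact C" and e: "e > 0"
  shows "\<exists>N. \<forall>F. finite F \<longrightarrow> F \<subseteq> C \<longrightarrow> (\<forall>x\<in>F. \<forall>y\<in>F. x \<noteq> y \<longrightarrow> e \<le> dist x y)
    \<longrightarrow> card F \<le> N"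
proof -
  have "e/2 > 0" using e by simp
  then obtain k where k: "finite k" "C \<subseteq> (\<Union>c\<in>k. ball c (e/2))"
    using seq_compact_imp_totally_bounded[OF compact_imp_seq_compact[OF C]] by blast
  \<comment> \<open>two points of an e-separated set never share a ball of radius e/2\<close>
  have "card F \<le> card k"
    if F: "finite F" "F \<subseteq> C" "\<forall>x\<in>F. \<forall>y\<in>F. x \<noteq> y \<longrightarrow> e \<le> dist x y" for F
  proof -
    have "\<forall>x\<in>F. \<exists>c. c \<in> k \<and> dist c x < e/2"
    proof
      fix x assume "x \<in> F"
      then obtain c where "c \<in> k" "x \<in> ball c (e/2)" using F(2) k(2) by blast
      then show "\<exists>c. c \<in> k \<and> dist c x < e/2" by auto
    qed
    then obtain c where c: "\<And>x. x \<in> F \<Longrightarrow> c x \<in> k \<and> dist (c x) x < e/2"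
      by (metis bchoice)
    have "inj_on c F"
    proof (rule inj_onI)
      fix x y assume xy: "x \<in> F" "y \<in> F" "c x = c y"
      have "dist x y \<le> dist (c x) x + dist (c y) y"
        using xy(3) dist_triangle3[of x y "c x"] by simp
      also have "\<dots> < e" using c[OF xy(1)] c[OF xy(2)] by simp
      finally show "x = y" using F(3) xy by force
    qed
    then show ?thesis using c k(1) by (intro card_inj_on_le) auto
  qed
  then show ?thesis by blast
qed

lemma compact_no_separated_sequence:
  fixes C :: "'a::metric_space set" and f :: "nat \<Rightarrow> 'a"
  assumes C: "compact C" and e: "e > 0" and f: "\<And>n. f n \<in> C"
    and sep: "\<And>n m. n \<noteq> m \<Longrightarrow> e \<le> dist (f n) (f m)"
  shows False
proof -
  obtain N where N: "\<And>F. finite F \<Longrightarrow> F \<subseteq> C \<Longrightarrow> (\<forall>x\<in>F. \<forall>y\<in>F. x \<noteq> y \<longrightarrow> e \<le> dist x y)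
      \<Longrightarrow> card F \<le> N"
    using compact_separated_card_bound[OF C e] by blast
  have "inj f"
  proof (rule injI)
    fix n m assume "f n = f m"
    then show "n = m" using sep[of n m] e by (cases "n = m") auto
  qed
  then have "card (f ` {..N}) = Suc N" by (simp add: card_image inj_on_subset)
  moreover have "card (f ` {..N}) \<le> N"
  proof (rule N)
    show "\<forall>x\<in>f ` {..N}. \<forall>y\<in>f ` {..N}. x \<noteq> y \<longrightarrow> e \<le> dist x y"
    proof (intro ballI impI)
      fix x y assume "x \<in> f ` {..N}" "y \<in> f ` {..N}" "x \<noteq> y"
      then obtain a b where "x = f a" "y = f b" "a \<noteq> b" by blast
      then show "e \<le> dist x y" using sep by simp
    qed
  qed (use f in auto)
  ultimately show False by simp
qed

lemma compact_op_approximate_eigenvector: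
  fixes T :: "'a::chilbert_space \<Rightarrow> 'a"
  assumes T: "compact_op T" and S: "closed S" and mu: "mu \<noteq> 0"
    and xs: "\<And>n. xs n \<in> S" "\<And>n. norm (xs n) = 1"
    and approx: "(\<lambda>n. T (xs n) - mu *\<^sub>C xs n) \<longlonglongrightarrow> 0"
  obtains y where "y \<in> S" "norm y = 1" "T y = mu *\<^sub>C y"
proof -
  have Tb: "bounded_clinear T" using T by (rule compact_op_bounded_clinear)
  have sc: "seq_compact (closure (T ` cball 0 1))"
    using T by (simp add: compact_op_def compact_imp_seq_compact)
  have "\<forall>n. T (xs n) \<in> closure (T ` cball 0 1)"
    using compact_op_image_unit_ball[OF T] xs(2) by simp
  then obtain z r where "z \<in> closure (T ` cball 0 1)" and r: "strict_mono r"
    and "((\<lambda>n. T (xs n)) \<circ> r) \<longlonglongrightarrow> z"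
    by (rule seq_compactE[OF sc])
  then have lim: "(\<lambda>n. T (xs (r n))) \<longlonglongrightarrow> z" by (simp add: o_def)
  \<comment> \<open>along the subsequence, x_n is close to T x_n / mu, hence converges\<close>
  have "(\<lambda>n. T (xs (r n)) - (T (xs (r n)) - mu *\<^sub>C xs (r n))) \<longlonglongrightarrow> z - 0"
    using LIMSEQ_subseq_LIMSEQ[OF approx r] lim by (intro tendsto_diff) (auto simp: o_def)
  then have "(\<lambda>n. mu *\<^sub>C xs (r n)) \<longlonglongrightarrow> z" by simp
  from bounded_clinear_tendsto[OF bounded_clinear_scaleC_const[of "inverse mu"] this]
  have lim_x: "(\<lambda>n. xs (r n)) \<longlonglongrightarrow> inverse mu *\<^sub>C z"
    using mu by (simp add: scaleC_scaleC scaleC_one)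
  define y where "y = inverse mu *\<^sub>C z"
  have "y \<in> S" using closed_sequentially[OF S _ lim_x] xs(1) by (simp add: y_def)
  moreover have "norm y = 1"
    using tendsto_norm[OF lim_x] xs(2) by (simp add: y_def LIMSEQ_const_iff)
  moreover have "T y = z"
    using LIMSEQ_unique[OF bounded_clinear_tendsto[OF Tb lim_x] lim] by (simp add: y_def)
  then have "T y = mu *\<^sub>C y" using mu by (simp add: y_def scaleC_scaleC scaleC_one)
  ultimately show ?thesis by (rule that)
qed

lemma not_bounded_below_unit_sequence:
  assumes U: "bounded_clinear U" and S: "csubspace S"
    and not_below: "\<not> (\<exists>c>0. \<forall>x\<in>S. c * norm x \<le> norm (U x))"
  obtains xs where "\<And>n. xs n \<in> S" "\<And>n. norm (xs n) = 1" "(\<lambda>n. U (xs n)) \<longlonglongrightarrow> 0"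
proof -
  have small: "\<forall>c>0. \<exists>x\<in>S. norm (U x) < c * norm x" using not_below by (auto simp: not_le)
  have "\<exists>x. x \<in> S \<and> norm x = 1 \<and> norm (U x) < 1 / Suc n" for n
  proof -
    obtain x where x: "x \<in> S" "norm (U x) < 1 / Suc n * norm x"
      using small[rule_format, of "1 / Suc n"] by auto
    then have "x \<noteq> 0" using U by (auto simp: bounded_clinear_zero)
    define y where "y = (1 / norm x) *\<^sub>R x"
    have "U y = (1 / norm x) *\<^sub>R U x"
      by (simp add: y_def scaleR_scaleC bounded_clinear_scaleC[OF U])
    then have "norm (U y) = norm (U x) / norm x" by simp
    also have "\<dots> < 1 / Suc n" using x \<open>x \<noteq> 0\<close> by (simp add: pos_divide_less_eq)
    finally show ?thesis
      using x(1) \<open>x \<noteq> 0\<close> by (intro exI[of _ y]) (auto simp: y_def csubspace_scaleR[OF S])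
  qed
  then obtain xs where "\<forall>n. xs n \<in> S \<and> norm (xs n) = 1 \<and> norm (U (xs n)) < 1 / Suc n"
    using choice[where Q = "\<lambda>n x. x \<in> S \<and> norm x = 1 \<and> norm (U x) < 1 / Suc n"] by blast
  then have xs: "\<And>n. xs n \<in> S" "\<And>n. norm (xs n) = 1" "\<And>n. norm (U (xs n)) < 1 / Suc n"
    by simp_all
  have "(\<lambda>n. U (xs n)) \<longlonglongrightarrow> 0"
  proof (rule tendsto_norm_zero_cancel, rule Lim_null_comparison[OF _ LIMSEQ_inverse_real_of_nat])
    show "\<forall>\<^sub>F n in sequentially. norm (norm (U (xs n))) \<le> inverse (real (Suc n))"
      using xs(3) by (auto intro!: always_eventually less_imp_le simp: inverse_eq_divide)
  qed
  with xs(1,2) show ?thesis by (rule that)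
qed

lemma compact_op_shift_bounded_below:
  fixes T :: "'a::chilbert_space \<Rightarrow> 'a"
  assumes T: "compact_op T" and S: "closed_csubspace S" and mu: "mu \<noteq> 0"
    and no_eigenvector: "\<And>y. y \<in> S \<Longrightarrow> T y = mu *\<^sub>C y \<Longrightarrow> y = 0"
  obtains c where "c > 0" "\<And>x. x \<in> S \<Longrightarrow> c * norm x \<le> norm (T x - mu *\<^sub>C x)"
proof -
  have Ss: "csubspace S" and Sc: "closed S" using S by (auto simp: closed_csubspace_def)
  have U: "bounded_clinear (\<lambda>x. T x - mu *\<^sub>C x)"
    by (rule bounded_clinear_sub[OF compact_op_bounded_clinear[OF T] bounded_clinear_scaleC_const])
  have "\<exists>c>0. \<forall>x\<in>S. c * norm x \<le> norm (T x - mu *\<^sub>C x)"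
  proof (rule ccontr)
    assume "\<not> ?thesis"
    then obtain xs where xs: "\<And>n. xs n \<in> S" "\<And>n. norm (xs n) = 1"
      and lim: "(\<lambda>n. T (xs n) - mu *\<^sub>C xs n) \<longlonglongrightarrow> 0"
      using not_bounded_below_unit_sequence[OF U Ss] by blast
    obtain y where "y \<in> S" "norm y = 1" "T y = mu *\<^sub>C y"
      using compact_op_approximate_eigenvector[where xs = xs, OF T Sc mu xs lim] .
    then show False using no_eigenvector by force
  qed
  then show ?thesis using that by blast
qed

lemma csubspace_image:
  assumes U: "bounded_clinear U" and S: "csubspace S"
  shows "csubspace (U ` S)"
  unfolding csubspace_def
proof (intro conjI ballI allI)
  show "0 \<in> U ` S"
    using S U by (metis bounded_clinear_zero csubspace_0 image_eqI)
  show "x + y \<in> U ` S" if "x \<in> U ` S" "y \<in> U ` S" for x y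
    using that S U by (auto simp flip: bounded_clinear_add[OF U] intro: csubspace_add)
  show "c *\<^sub>C x \<in> U ` S" if "x \<in> U ` S" for c x
    using that S U by (auto simp flip: bounded_clinear_scaleC[OF U] intro: csubspace_scaleC)
qed

lemma closed_csubspace_image_bounded_below:
  fixes U :: "'a::chilbert_space \<Rightarrow> 'a"
  assumes U: "bounded_clinear U" and S: "closed_csubspace S"
    and c: "c > 0" and below: "\<And>x. x \<in> S \<Longrightarrow> c * norm x \<le> norm (U x)"
  shows "closed_csubspace (U ` S)"
proof -
  have Ss: "csubspace S" and Sc: "closed S" using S by (auto simp: closed_csubspace_def)
  have "l \<in> U ` S" if x: "\<And>n. x n \<in> U ` S" and lim: "x \<longlonglongrightarrow> l" for x l
  proof -
    from x have "\<forall>n. \<exists>t. t \<in> S \<and> x n = U t" by blast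
    then obtain s where s: "\<And>n. s n \<in> S" "\<And>n. x n = U (s n)" by metis
    have "Cauchy s"
    proof (rule metric_CauchyI)
      fix e :: real assume "e > 0"
      then obtain M where M: "\<And>m n. m \<ge> M \<Longrightarrow> n \<ge> M \<Longrightarrow> dist (x m) (x n) < c * e"
        using LIMSEQ_imp_Cauchy[OF lim] c by (meson metric_CauchyD mult_pos_pos)
      have "dist (s m) (s n) < e" if "m \<ge> M" "n \<ge> M" for m n
      proof -
        have "c * dist (s m) (s n) \<le> dist (x m) (x n)"
          using below[of "s m - s n"] Ss s U
          by (simp add: dist_norm csubspace_diff bounded_clinear_diff)
        then have "c * dist (s m) (s n) < c * e" using M[OF that] by linarith
        then show ?thesis using c by simp
      qed
      then show "\<exists>M. \<forall>m\<ge>M. \<forall>n\<ge>M. dist (s m) (s n) < e" by blast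
    qed
    then obtain s0 where s0: "s \<longlonglongrightarrow> s0" using Cauchy_convergent_iff convergent_def by blast
    have "s0 \<in> S" using closed_sequentially[OF Sc _ s0] s(1) by simp
    moreover have "x = (\<lambda>n. U (s n))" by (simp add: fun_eq_iff s(2))
    then have "x \<longlonglongrightarrow> U s0" using bounded_clinear_tendsto[OF U s0] by simp
    then have "l = U s0" using lim LIMSEQ_unique by blast
    ultimately show ?thesis by blast
  qed
  then have "closed (U ` S)" by (meson closed_sequential_limits)
  then show ?thesis using csubspace_image[OF U Ss] by (simp add: closed_csubspace_def)
qed

lemma funpow_image_subset: "U ` S \<subseteq> S \<Longrightarrow> (U ^^ n) ` S \<subseteq> S"
  by (induction n) (auto simp: image_comp[symmetric])

lemma funpow_image_strict_decreasing:
  assumes inj: "inj_on U S" and img: "U ` S \<subset> S"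
  shows "(U ^^ Suc n) ` S \<subset> (U ^^ n) ` S"
proof (induction n)
  case 0
  then show ?case using img by simp
next
  case (Suc n)
  have sub: "(U ^^ k) ` S \<subseteq> S" for k
    using img by (intro funpow_image_subset) auto
  have "(U ^^ Suc (Suc n)) ` S = U ` (U ^^ Suc n) ` S" and "(U ^^ Suc n) ` S = U ` (U ^^ n) ` S"
    by (simp_all add: image_comp)
  then show ?case
    using Suc.IH inj_on_image_eq_iff[OF inj sub sub] image_mono[of _ _ U] by (metis psubset_eq)
qed

lemma closed_csubspace_funpow_image:
  fixes U :: "'a::chilbert_space \<Rightarrow> 'a"
  assumes U: "bounded_clinear U" and S: "closed_csubspace S" and US: "U ` S \<subseteq> S"
    and c: "c > 0" and below: "\<And>x. x \<in> S \<Longrightarrow> c * norm x \<le> norm (U x)"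
  shows "closed_csubspace ((U ^^ n) ` S)"
proof (induction n)
  case 0
  then show ?case using S by simp
next
  case (Suc n)
  have "(U ^^ Suc n) ` S = U ` (U ^^ n) ` S" by (simp add: image_comp)
  moreover have "closed_csubspace (U ` (U ^^ n) ` S)"
  proof (rule closed_csubspace_image_bounded_below[OF U Suc c])
    show "c * norm x \<le> norm (U x)" if "x \<in> (U ^^ n) ` S" for x
      using below funpow_image_subset[OF US, of n] that by blast
  qed
  ultimately show ?case by simp
qed

lemma compact_op_no_separated_unit_images:
  fixes T :: "'a::chilbert_space \<Rightarrow> 'a" and xs :: "nat \<Rightarrow> 'a"
  assumes T: "compact_op T" and e: "e > 0" and xs: "\<And>n. norm (xs n) \<le> 1"
    and sep: "\<And>n m. n < m \<Longrightarrow> e \<le> dist (T (xs n)) (T (xs m))"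
  shows False
proof (rule compact_no_separated_sequence[where f = "\<lambda>n. T (xs n)"])
  show "compact (closure (T ` cball 0 1))" using T by (simp add: compact_op_def)
  show "e > 0" by (rule e)
  show "T (xs n) \<in> closure (T ` cball 0 1)" for n
    using compact_op_image_unit_ball[OF T xs] .
  show "e \<le> dist (T (xs n)) (T (xs m))" if "n \<noteq> m" for n m
  proof (cases "n < m")
    case False
    then have "m < n" using that by simp
    then show ?thesis using sep[of m n] by (simp add: dist_commute)
  qed (rule sep)
qed

lemma strict_chain_orthogonal_unit_sequence:
  fixes R :: "nat \<Rightarrow> 'a::chilbert_space set"
  assumes R: "\<And>n. closed_csubspace (R n)" and strict: "\<And>n. R (Suc n) \<subset> R n"
  obtains xs where "\<And>n. xs n \<in> R n" "\<And>n. norm (xs n) = 1"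
    "\<And>n m. m \<in> R (Suc n) \<Longrightarrow> cinner m (xs n) = 0"
proof -
  have "\<forall>n. \<exists>x. x \<in> R n \<and> norm x = 1 \<and> (\<forall>m\<in>R (Suc n). cinner m x = 0)"
  proof
    fix n
    obtain u where u: "u \<in> R n" "u \<notin> R (Suc n)" using strict[of n] by blast
    obtain p where p: "p \<in> R (Suc n)" "\<And>m. m \<in> R (Suc n) \<Longrightarrow> cinner m (u - p) = 0"
      using orthogonal_projection_exists[OF R[of "Suc n"], where z = u] by blast
    have Rn: "csubspace (R n)" using R[of n] by (simp add: closed_csubspace_def)
    have "u - p \<in> R n" using u(1) p(1) strict[of n] Rn by (auto intro: csubspace_diff)
    moreover have "u - p \<noteq> 0" using u p by auto
    ultimately show "\<exists>x. x \<in> R n \<and> norm x = 1 \<and> (\<forall>m\<in>R (Suc n). cinner m x = 0)"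
      using p(2) Rn
      by (intro exI[of _ "(1 / norm (u - p)) *\<^sub>R (u - p)"]) (simp add: csubspace_scaleR cinner_scaleR_right)
  qed
  from choice[OF this]
  obtain xs where "\<forall>n. xs n \<in> R n \<and> norm (xs n) = 1 \<and> (\<forall>m\<in>R (Suc n). cinner m (xs n) = 0)"
    by blast
  then show ?thesis using that by blast
qed

lemma shift_chain_separated:
  fixes T :: "'a::complex_inner \<Rightarrow> 'a"
  assumes R: "\<And>n. csubspace (R n)" and dec: "decseq R"
    and shift: "\<And>n x. x \<in> R n \<Longrightarrow> T x - mu *\<^sub>C x \<in> R (Suc n)"
    and xs: "\<And>n. xs n \<in> R n" "\<And>n. norm (xs n) = 1" "\<And>n m. m \<in> R (Suc n) \<Longrightarrow> cinner m (xs n) = 0"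
    and "n < m"
  shows "cmod mu \<le> dist (T (xs n)) (T (xs m))"
proof -
  have "T (xs m) - mu *\<^sub>C xs m \<in> R (Suc n)" and "mu *\<^sub>C xs m \<in> R (Suc n)"
    using shift[OF xs(1)] xs(1)[of m] decseqD[OF dec, of "Suc n" "Suc m"] decseqD[OF dec, of "Suc n" m]
      \<open>n < m\<close> csubspace_scaleC[OF R]
    by auto
  then have "T (xs m) \<in> R (Suc n)" using csubspace_add[OF R] by fastforce
  \<comment> \<open>T x_n - T x_m = mu x_n + r with r orthogonal to x_n\<close>
  define r where "r = (T (xs n) - mu *\<^sub>C xs n) - T (xs m)"
  have "r \<in> R (Suc n)"
    using shift[OF xs(1)] \<open>T (xs m) \<in> R (Suc n)\<close> by (simp add: r_def csubspace_diff[OF R])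
  then have "cinner (xs n) r = 0" using xs(3) cinner_zero_commute by blast
  then have "cinner (mu *\<^sub>C xs n) r = 0" by (simp add: cinner_scaleC_left)
  then have "(norm (T (xs n) - T (xs m)))^2 = (norm (mu *\<^sub>C xs n))^2 + (norm r)^2"
    using norm_add_Pythagorean_cinner[of "mu *\<^sub>C xs n" r] by (simp add: r_def)
  then have "(cmod mu)^2 \<le> (norm (T (xs n) - T (xs m)))^2"
    using xs(2)[of n] by (simp add: norm_scaleC)
  then show ?thesis by (simp add: dist_norm power2_le_imp_le[OF _ norm_ge_zero])
qed

text \<open>If T - mu were not surjective, the images of S under its powers
  would form a strictly decreasing chain of closed subspaces, and unit vectors orthogonal to the
  next member of the chain have |mu|-separated images under T, contradicting compactness.\<close>

lemma compact_op_shift_surj: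
  fixes T :: "'a::chilbert_space \<Rightarrow> 'a"
  assumes T: "compact_op T" and S: "closed_csubspace S" and inv: "T ` S \<subseteq> S" and mu: "mu \<noteq> 0"
    and no_eigenvector: "\<And>y. y \<in> S \<Longrightarrow> T y = mu *\<^sub>C y \<Longrightarrow> y = 0"
  shows "(\<lambda>x. T x - mu *\<^sub>C x) ` S = S"
proof (rule ccontr)
  define U where "U x = T x - mu *\<^sub>C x" for x
  assume "(\<lambda>x. T x - mu *\<^sub>C x) ` S \<noteq> S"
  then have neq: "U ` S \<noteq> S" by (simp add: U_def)
  have Tb: "bounded_clinear T" using T by (rule compact_op_bounded_clinear)
  have Ub: "bounded_clinear U"
    unfolding U_def by (rule bounded_clinear_sub[OF Tb bounded_clinear_scaleC_const])
  have Ss: "csubspace S" using S by (simp add: closed_csubspace_def)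
  obtain c where c: "c > 0" "\<And>x. x \<in> S \<Longrightarrow> c * norm x \<le> norm (T x - mu *\<^sub>C x)"
    using compact_op_shift_bounded_below[OF T S mu no_eigenvector] by blast
  have US: "U ` S \<subseteq> S"
    using inv Ss by (auto simp: U_def intro: csubspace_diff csubspace_scaleC)
  have inj: "inj_on U S"
  proof (rule inj_onI)
    fix x y assume "x \<in> S" "y \<in> S" "U x = U y"
    then show "x = y"
      using no_eigenvector[of "x - y"] Ss
      by (simp add: U_def csubspace_diff bounded_clinear_diff[OF Tb] scaleC_diff_right algebra_simps)
  qed
  define R where "R n = (U ^^ n) ` S" for n
  have strict: "R (Suc n) \<subset> R n" for n
    unfolding R_def by (rule funpow_image_strict_decreasing[OF inj psubsetI[OF US neq]])
  then have dec: "decseq R" by (intro decseq_SucI) auto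
  have R_closed: "closed_csubspace (R n)" for n
    unfolding R_def using c by (intro closed_csubspace_funpow_image[OF Ub S US]) (auto simp: U_def)
  obtain xs where xs: "\<And>n. xs n \<in> R n" "\<And>n. norm (xs n) = 1"
    "\<And>n m. m \<in> R (Suc n) \<Longrightarrow> cinner m (xs n) = 0"
    using strict_chain_orthogonal_unit_sequence[where R = R, OF R_closed strict] by blast
  have "cmod mu \<le> dist (T (xs n)) (T (xs m))" if "n < m" for n m
  proof (rule shift_chain_separated[where R = R, OF _ dec _ xs that])
    show "csubspace (R n)" for n using R_closed[of n] by (simp add: closed_csubspace_def)
    show "T x - mu *\<^sub>C x \<in> R (Suc n)" if "x \<in> R n" for n x
      using that by (auto simp: R_def U_def)
  qed
  moreover have "cmod mu > 0" using mu by simp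
  ultimately show False
    using compact_op_no_separated_unit_images[OF T _ _, of "cmod mu" xs] xs(2) by simp
qed

section \<open>Common eigenvectors of commuting operators in finite dimension\<close>

definition poly_op :: "('a::complex_vector \<Rightarrow> 'a) \<Rightarrow> complex poly \<Rightarrow> 'a \<Rightarrow> 'a" where
  "poly_op T p v = (\<Sum>k\<le>degree p. coeff p k *\<^sub>C (T ^^ k) v)"

lemma poly_op_sum_atMost:
  assumes "degree p \<le> N"
  shows "poly_op T p v = (\<Sum>k\<le>N. coeff p k *\<^sub>C (T ^^ k) v)"
  unfolding poly_op_def
  by (rule sum.mono_neutral_left) (use assms in \<open>auto simp: coeff_eq_0\<close>)

lemma poly_op_add: "poly_op T (p + q) v = poly_op T p v + poly_op T q v"
proof -
  define N where "N = max (degree p) (degree q)"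
  have "poly_op T (p + q) v = (\<Sum>k\<le>N. coeff (p + q) k *\<^sub>C (T ^^ k) v)"
    by (rule poly_op_sum_atMost) (use degree_add_le_max[of p q] in \<open>simp add: N_def\<close>)
  also have "\<dots> = (\<Sum>k\<le>N. coeff p k *\<^sub>C (T ^^ k) v) + (\<Sum>k\<le>N. coeff q k *\<^sub>C (T ^^ k) v)"
    by (simp add: scaleC_add_left sum.distrib)
  also have "\<dots> = poly_op T p v + poly_op T q v"
    by (simp add: poly_op_sum_atMost[of p N] poly_op_sum_atMost[of q N] N_def)
  finally show ?thesis .
qed

lemma poly_op_smult: "poly_op T (smult a p) v = a *\<^sub>C poly_op T p v"
  by (simp add: poly_op_sum_atMost[OF degree_smult_le] poly_op_def scaleC_sum_right scaleC_scaleC)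

lemma poly_op_pCons_0:
  assumes T: "clinear T"
  shows "poly_op T (pCons 0 p) v = T (poly_op T p v)"
proof -
  have "poly_op T (pCons 0 p) v = (\<Sum>k\<le>Suc (degree p). coeff (pCons 0 p) k *\<^sub>C (T ^^ k) v)"
    by (rule poly_op_sum_atMost) (rule degree_pCons_le)
  also have "\<dots> = (\<Sum>k\<le>degree p. coeff p k *\<^sub>C T ((T ^^ k) v))"
    by (subst sum.atMost_Suc_shift) simp
  also have "\<dots> = T (poly_op T p v)"
    by (simp add: poly_op_def module_hom.sum[OF T] module_hom.scale[OF T])
  finally show ?thesis .
qed

lemma poly_op_const: "poly_op T [:a:] v = a *\<^sub>C v"
  by (simp add: poly_op_def)

lemma poly_op_monom_1: "poly_op T (monom 1 n) v = (T ^^ n) v"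
proof -
  have "poly_op T (monom 1 n) v = (\<Sum>k\<le>n. coeff (monom 1 n) k *\<^sub>C (T ^^ k) v)"
    by (rule poly_op_sum_atMost) (simp add: degree_monom_eq)
  also have "\<dots> = (\<Sum>k\<le>n. if n = k then (T ^^ k) v else 0)"
    by (rule sum.cong) (auto simp: scaleC_one)
  finally show ?thesis by (simp add: sum.delta)
qed

lemma funpow_invariant: "(\<And>x. x \<in> W \<Longrightarrow> T x \<in> W) \<Longrightarrow> v \<in> W \<Longrightarrow> (T ^^ k) v \<in> W"
  by (induction k) auto

lemma poly_op_invariant:
  assumes W: "csubspace W" and TW: "\<And>x. x \<in> W \<Longrightarrow> T x \<in> W" and v: "v \<in> W"
  shows "poly_op T p v \<in> W"
  unfolding poly_op_def
  by (rule csubspace_sum[OF W]) (simp add: csubspace_scaleC[OF W] funpow_invariant[OF TW v])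

text \<open>Factor p into linear factors: the last factor z - T that does not kill the vector
  produces an eigenvector.\<close>

lemma poly_op_root_eigenvector:
  assumes T: "clinear T"
  shows "p \<noteq> 0 \<Longrightarrow> poly_op T p v = 0 \<Longrightarrow> v \<noteq> 0 \<Longrightarrow>
    \<exists>c q. poly_op T q v \<noteq> 0 \<and> T (poly_op T q v) = c *\<^sub>C poly_op T q v"
proof (induction "degree p" arbitrary: p rule: less_induct)
  case less
  show ?case
  proof (cases "degree p = 0")
    case True
    then have "p = [:coeff p 0:]" by (simp add: degree_0_id)
    then have "coeff p 0 \<noteq> 0" "coeff p 0 *\<^sub>C v = 0"
      using less.prems(1,2) by (metis pCons_0_0, metis poly_op_const)
    then show ?thesis using less.prems(3) scaleC_eq_0_imp by blast
  next
    case False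
    then have "\<not> constant (poly p)" by (simp add: constant_degree)
    then obtain z where "poly p z = 0" using fundamental_theorem_of_algebra by blast
    then obtain q where pq: "p = [:-z, 1:] * q" by (metis dvdE poly_eq_0_iff_dvd)
    then have q0: "q \<noteq> 0" using less.prems(1) by auto
    have "degree ([:-z, 1:] * q) = degree [:-z, 1:] + degree q"
      by (rule degree_mult_eq) (simp_all add: q0)
    then have dq: "degree q < degree p" unfolding pq[symmetric] by simp
    have "p = smult (-z) q + pCons 0 q" using pq by simp
    then have "poly_op T p v = - z *\<^sub>C poly_op T q v + T (poly_op T q v)"
      by (simp only: poly_op_add poly_op_smult poly_op_pCons_0[OF T])
    then have eq: "T (poly_op T q v) = z *\<^sub>C poly_op T q v"
      using less.prems(2) by (simp add: scaleC_minus_left add_eq_0_iff neg_eq_iff_add_eq_0)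
    show ?thesis
    proof (cases "poly_op T q v = 0")
      case True
      then show ?thesis using less.hyps[OF dq q0] less.prems(3) by blast
    qed (use eq in blast)
  qed
qed

lemma poly_op_annihilator_exists:
  assumes B: "finite B" and orbit: "\<And>k. (T ^^ k) v \<in> cvs.span B"
  shows "\<exists>p. p \<noteq> 0 \<and> poly_op T p v = 0"
proof (cases "inj_on (\<lambda>k. (T ^^ k) v) {..card B}")
  case False
  then obtain a b where ab: "a \<noteq> b" "(T ^^ a) v = (T ^^ b) v"
    by (auto simp: inj_on_def)
  define p :: "complex poly" where "p = monom 1 b + smult (-1) (monom 1 a)"
  have "coeff p b = 1" using ab(1) by (simp add: p_def)
  then have "p \<noteq> 0" by auto
  moreover have "poly_op T p v = 0"
    unfolding p_def poly_op_add poly_op_smult poly_op_monom_1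
    using ab(2) by (simp add: scaleC_minus_left scaleC_one)
  ultimately show ?thesis by blast
next
  case True
  \<comment> \<open>card B + 1 distinct vectors in the span of B are linearly dependent\<close>
  define F where "F = (\<lambda>k. (T ^^ k) v) ` {..card B}"
  have "cvs.dependent F"
    using cvs.independent_span_bound[OF B] orbit True by (fastforce simp: F_def card_image)
  moreover have "finite F" by (simp add: F_def)
  ultimately obtain u where u: "\<exists>x\<in>F. u x \<noteq> 0" "(\<Sum>x\<in>F. u x *\<^sub>C x) = 0"
    using cvs.dependent_finite by blast
  define p where "p = (\<Sum>k\<le>card B. monom (u ((T ^^ k) v)) k)"
  have cp: "coeff p k = (if k \<le> card B then u ((T ^^ k) v) else 0)" for k
    by (simp add: p_def coeff_sum)
  then have "p \<noteq> 0" using u(1) by (auto simp: F_def poly_eq_iff)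
  moreover have "poly_op T p v = 0"
  proof -
    have "poly_op T p v = (\<Sum>k\<le>card B. u ((T ^^ k) v) *\<^sub>C (T ^^ k) v)"
      by (simp add: poly_op_sum_atMost[where N = "card B"] degree_le cp)
    also have "\<dots> = (\<Sum>x\<in>F. u x *\<^sub>C x)"
      by (simp add: F_def sum.reindex[OF True])
    finally show ?thesis using u(2) by simp
  qed
  ultimately show ?thesis by blast
qed

lemma finite_dim_invariant_eigenvector:
  fixes T :: "'a::complex_vector \<Rightarrow> 'a"
  assumes T: "clinear T" and W: "csubspace W" and TW: "\<And>x. x \<in> W \<Longrightarrow> T x \<in> W"
    and B: "finite B" "W \<subseteq> cvs.span B" and v: "v \<in> W" "v \<noteq> 0"
  shows "\<exists>c w. w \<in> W \<and> w \<noteq> 0 \<and> T w = c *\<^sub>C w"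
proof -
  have "(T ^^ k) v \<in> cvs.span B" for k
    using funpow_invariant[of W T v k] TW v(1) B(2) by blast
  then obtain p where "p \<noteq> 0" "poly_op T p v = 0"
    using poly_op_annihilator_exists[OF B(1)] by blast
  then obtain c q where "poly_op T q v \<noteq> 0" "T (poly_op T q v) = c *\<^sub>C poly_op T q v"
    using poly_op_root_eigenvector[OF T] v(2) by blast
  then show ?thesis using poly_op_invariant[where T = T, OF W TW v(1)] by blast
qed

lemma subspace_dim_le_imp_subset:
  fixes W W' :: "'a::complex_vector set"
  assumes W': "cvs.subspace W'" and sub: "W' \<subseteq> W" and WB: "W \<subseteq> cvs.span B" and B: "finite B"
    and dim: "cvs.dim W \<le> cvs.dim W'"
  shows "W \<subseteq> W'"
proof (rule ccontr)
  assume "\<not> W \<subseteq> W'"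
  then obtain u where u: "u \<in> W" "u \<notin> W'" by blast
  obtain B' where B': "B' \<subseteq> W'" "cvs.independent B'" "W' \<subseteq> cvs.span B'" "card B' = cvs.dim W'"
    by (rule cvs.basis_exists)
  obtain BW where BW: "BW \<subseteq> W" "cvs.independent BW" "W \<subseteq> cvs.span BW" "card BW = cvs.dim W"
    by (rule cvs.basis_exists)
  have fin: "finite B'" "finite BW"
    using cvs.independent_span_bound[OF B B'(2)] cvs.independent_span_bound[OF B BW(2)]
      B'(1) BW(1) sub WB by blast+
  have "u \<notin> cvs.span B'" using cvs.span_minimal[OF B'(1) W'] u(2) by blast
  then have "cvs.independent (insert u B')" by (rule cvs.independent_insertI[OF _ B'(2)])
  moreover have "insert u B' \<subseteq> cvs.span BW" using u(1) B'(1) sub BW(3) by blast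
  ultimately have "card (insert u B') \<le> card BW"
    using cvs.independent_span_bound[OF fin(2)] by blast
  moreover have "card (insert u B') = Suc (card B')"
    using fin(1) u(2) B'(1) by (subst card_insert_disjoint) auto
  ultimately show False using BW(4) B'(4) dim by simp
qed

text \<open>A nonzero invariant subspace of minimal dimension is contained in an eigenspace of each
  operator of the family, because such eigenspaces are again invariant.\<close>

lemma commuting_common_eigenvector:
  fixes A :: "'i \<Rightarrow> 'a::complex_vector \<Rightarrow> 'a"
  assumes lin: "\<And>j. j \<in> I \<Longrightarrow> clinear (A j)"
    and comm: "\<And>i j x. i \<in> I \<Longrightarrow> j \<in> I \<Longrightarrow> A i (A j x) = A j (A i x)"
    and K: "csubspace K" "K \<subseteq> cvs.span B" "finite B"
    and inv: "\<And>j x. j \<in> I \<Longrightarrow> x \<in> K \<Longrightarrow> A j x \<in> K"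
    and y: "y \<in> K" "y \<noteq> 0"
  shows "\<exists>w\<in>K. w \<noteq> 0 \<and> (\<forall>j\<in>I. \<exists>c. A j w = c *\<^sub>C w)"
proof -
  define P where "P W \<longleftrightarrow> csubspace W \<and> W \<subseteq> K \<and> (\<exists>w\<in>W. w \<noteq> 0) \<and> (\<forall>j\<in>I. \<forall>x\<in>W. A j x \<in> W)"
    for W
  have "P K" using K y inv by (auto simp: P_def)
  then obtain W where W: "P W" and minimal: "\<And>W'. P W' \<Longrightarrow> cvs.dim W \<le> cvs.dim W'"
    using ex_has_least_nat[of P K cvs.dim] by blast
  have Ws: "csubspace W" and WK: "W \<subseteq> K" and Winv: "\<And>j x. j \<in> I \<Longrightarrow> x \<in> W \<Longrightarrow> A j x \<in> W"
    using W by (auto simp: P_def)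
  obtain w0 where w0: "w0 \<in> W" "w0 \<noteq> 0" using W by (auto simp: P_def)
  have "\<exists>c. A j w0 = c *\<^sub>C w0" if j: "j \<in> I" for j
  proof -
    obtain c w where "w \<in> W" "w \<noteq> 0" "A j w = c *\<^sub>C w"
      using finite_dim_invariant_eigenvector[OF lin[OF j] Ws Winv[OF j] K(3) _ w0] WK K(2) by blast
    define W' where "W' = {x\<in>W. A j x = c *\<^sub>C x}"
    have W's: "csubspace W'"
      using Ws unfolding W'_def csubspace_def
      by (simp add: module_hom.add[OF lin[OF j]] module_hom.scale[OF lin[OF j]]
          module_hom.zero[OF lin[OF j]] scaleC_add_right scaleC_scaleC mult.commute)
    have "A k x \<in> W'" if "k \<in> I" "x \<in> W'" for k x
      using that comm[OF j, of k x] Winv by (simp add: W'_def module_hom.scale[OF lin])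
    then have "P W'"
      using W's WK \<open>w \<in> W\<close> \<open>w \<noteq> 0\<close> \<open>A j w = c *\<^sub>C w\<close> unfolding P_def W'_def by blast
    then have "W \<subseteq> W'"
      using subspace_dim_le_imp_subset[of W' W B] minimal W's WK K
      by (auto simp: csubspace_iff_subspace W'_def)
    then show ?thesis using w0 by (auto simp: W'_def)
  qed
  then show ?thesis using w0 WK by blast
qed

section \<open>Eigenspaces of compact operators\<close>

definition orthonormal :: "'a::complex_inner set \<Rightarrow> bool" where
  "orthonormal F \<longleftrightarrow> (\<forall>e\<in>F. norm e = 1) \<and> (\<forall>e\<in>F. \<forall>f\<in>F. e \<noteq> f \<longrightarrow> cinner e f = 0)"

lemma orthonormal_scaleC_dist:
  assumes "orthonormal F" "a \<in> F" "b \<in> F" "a \<noteq> b"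
  shows "cmod c \<le> dist (c *\<^sub>C a) (c *\<^sub>C b)"
proof -
  have "(norm (a - b))^2 = 2" using assms by (simp add: orthonormal_def power2_norm_diff)
  then have "1\<^sup>2 \<le> (norm (a - b))^2" by simp
  then have "1 \<le> norm (a - b)" by (rule power2_le_imp_le) simp
  moreover have "dist (c *\<^sub>C a) (c *\<^sub>C b) = cmod c * norm (a - b)"
    by (simp add: dist_norm norm_scaleC flip: scaleC_diff_right)
  ultimately show ?thesis using mult_left_mono[of 1 "norm (a - b)" "cmod c"] by simp
qed

lemma orthonormal_extend:
  assumes K: "csubspace K" and F: "finite F" "F \<subseteq> K" "orthonormal F"
    and v: "v \<in> K" "v \<notin> cvs.span F"
  obtains x where "x \<in> K" "x \<notin> F" "orthonormal (insert x F)"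
proof -
  have on: "\<And>e. e \<in> F \<Longrightarrow> norm e = 1"
    and orth: "\<And>e f. e \<in> F \<Longrightarrow> f \<in> F \<Longrightarrow> e \<noteq> f \<Longrightarrow> cinner e f = 0"
    using F(3) by (auto simp: orthonormal_def)
  \<comment> \<open>one Gram-Schmidt step\<close>
  define r where "r = v - (\<Sum>e\<in>F. cinner e v *\<^sub>C e)"
  have "r \<in> K"
    unfolding r_def using F(2) v(1)
    by (intro csubspace_diff[OF K] csubspace_sum[OF K] csubspace_scaleC[OF K]) auto
  have "(\<Sum>e\<in>F. cinner e v *\<^sub>C e) \<in> cvs.span F"
    by (intro cvs.span_sum cvs.span_scale cvs.span_base)
  then have "r \<noteq> 0" using v(2) by (auto simp: r_def)
  have r_orth: "cinner e' r = 0" if "e' \<in> F" for e'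
  proof -
    have "cinner e' (\<Sum>e\<in>F. cinner e v *\<^sub>C e) = (\<Sum>e\<in>F. cinner e v * cinner e' e)"
      by (simp add: cinner_sum_right cinner_scaleC_right)
    also have "\<dots> = cinner e' v * cinner e' e' + (\<Sum>e\<in>F - {e'}. cinner e v * cinner e' e)"
      using F(1) that by (simp add: sum.remove)
    also have "(\<Sum>e\<in>F - {e'}. cinner e v * cinner e' e) = 0"
      using orth that by (intro sum.neutral) auto
    finally show ?thesis
      using on[OF that] by (simp add: r_def cinner_diff_right cinner_self_eq_power2_norm)
  qed
  define x where "x = (1 / norm r) *\<^sub>R r"
  have "norm x = 1" using \<open>r \<noteq> 0\<close> by (simp add: x_def)
  moreover have "x \<in> K" using \<open>r \<in> K\<close> K by (simp add: x_def csubspace_scaleR)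
  moreover have x_orth: "cinner e x = 0" if "e \<in> F" for e
    using r_orth[OF that] by (simp add: x_def cinner_scaleR_right)
  moreover have "cinner x e = 0" if "e \<in> F" for e
    by (subst cinner_zero_commute) (rule x_orth[OF that])
  moreover have "x \<notin> F"
  proof
    assume "x \<in> F"
    then have "cinner x x = 0" by (rule x_orth)
    then show False using \<open>norm x = 1\<close> by simp
  qed
  ultimately show ?thesis using that F(3) by (auto simp: orthonormal_def)
qed

lemma infinite_dim_orthonormal_subsets:
  assumes K: "csubspace K" and infinite_dim: "\<not> (\<exists>B. finite B \<and> K \<subseteq> cvs.span B)"
  shows "\<exists>F. finite F \<and> F \<subseteq> K \<and> orthonormal F \<and> card F = n"
proof (induction n)
  case 0
  show ?case by (intro exI[of _ "{}"]) (simp add: orthonormal_def)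
next
  case (Suc n)
  then obtain F where F: "finite F" "F \<subseteq> K" "orthonormal F" "card F = n" by blast
  then obtain v where "v \<in> K" "v \<notin> cvs.span F" using infinite_dim by blast
  then obtain x where "x \<in> K" "x \<notin> F" "orthonormal (insert x F)"
    using orthonormal_extend[OF K F(1-3)] by blast
  then show ?case using F by (intro exI[of _ "insert x F"]) simp
qed

text \<open>On an orthonormal set of eigenvectors for mu, T takes values that are at least
  cmod mu apart, and a compact set contains only boundedly many such points.\<close>

lemma compact_op_eigenspace_finite_dim:
  fixes T :: "'a::chilbert_space \<Rightarrow> 'a"
  assumes T: "compact_op T" and mu: "mu \<noteq> 0" and K: "csubspace K"
    and eigen: "\<And>v. v \<in> K \<Longrightarrow> T v = mu *\<^sub>C v"
  shows "\<exists>B. finite B \<and> K \<subseteq> cvs.span B"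
proof (rule ccontr)
  assume "\<not> ?thesis"
  have mu0: "cmod mu > 0" using mu by simp
  have "compact (closure (T ` cball 0 1))" using T by (simp add: compact_op_def)
  from compact_separated_card_bound[OF this mu0] obtain N where N:
    "\<forall>F. finite F \<longrightarrow> F \<subseteq> closure (T ` cball 0 1) \<longrightarrow>
      (\<forall>x\<in>F. \<forall>y\<in>F. x \<noteq> y \<longrightarrow> cmod mu \<le> dist x y) \<longrightarrow> card F \<le> N"
    by (elim exE)
  from infinite_dim_orthonormal_subsets[OF K \<open>\<not> ?thesis\<close>, of "Suc N"]
  obtain F where F: "finite F" "F \<subseteq> K" "orthonormal F" "card F = Suc N"
    by (elim exE conjE)
  have "inj_on (\<lambda>e. mu *\<^sub>C e) F"
  proof (rule inj_onI)
    fix a b assume "mu *\<^sub>C a = mu *\<^sub>C b"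
    then have "mu *\<^sub>C (a - b) = 0" by (simp add: scaleC_diff_right)
    then have "a - b = 0" using mu by (rule scaleC_eq_0_imp)
    then show "a = b" by simp
  qed
  then have "card ((\<lambda>e. mu *\<^sub>C e) ` F) = Suc N" using F(4) by (simp add: card_image)
  moreover have "card ((\<lambda>e. mu *\<^sub>C e) ` F) \<le> N"
  proof (rule N[rule_format])
    show "finite ((\<lambda>e. mu *\<^sub>C e) ` F)" using F(1) by simp
    show "(\<lambda>e. mu *\<^sub>C e) ` F \<subseteq> closure (T ` cball 0 1)"
    proof
      fix g assume "g \<in> (\<lambda>e. mu *\<^sub>C e) ` F"
      then obtain e where e: "e \<in> F" "g = mu *\<^sub>C e" by blast
      then have "g = T e" "norm e = 1" using eigen F(2,3) by (auto simp: orthonormal_def)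
      then show "g \<in> closure (T ` cball 0 1)" using compact_op_image_unit_ball[OF T] by simp
    qed
    show "cmod mu \<le> dist x y"
      if "x \<in> (\<lambda>e. mu *\<^sub>C e) ` F" "y \<in> (\<lambda>e. mu *\<^sub>C e) ` F" "x \<noteq> y" for x y
      using that orthonormal_scaleC_dist[OF F(3)] by blast
  qed
  ultimately show False by simp
qed

section \<open>Commuting compact spherical isometries\<close>

lemma has_sum_diff:
  fixes f g :: "'i \<Rightarrow> 'b::topological_ab_group_add"
  assumes "(f has_sum a) A" "(g has_sum b) A"
  shows "((\<lambda>x. f x - g x) has_sum (a - b)) A"
proof -
  have "((\<lambda>x. - g x) has_sum (- b)) A" using assms(2) by (simp add: has_sum_uminus)
  from has_sum_add[OF assms(1) this] show ?thesis by simp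
qed

locale compact_spherical_isometry =
  fixes A :: "'i \<Rightarrow> 'a::chilbert_space \<Rightarrow> 'a" and I :: "'i set"
  assumes compact: "\<And>i. i \<in> I \<Longrightarrow> compact_op (A i)"
    and commute: "\<And>i j. i \<in> I \<Longrightarrow> j \<in> I \<Longrightarrow> A i \<circ> A j = A j \<circ> A i"
    and sum_one: "\<And>x. ((\<lambda>i. adjoint (A i) (A i x)) has_sum x) I"
begin

lemma bounded_clinear_A: "i \<in> I \<Longrightarrow> bounded_clinear (A i)"
  using compact by (rule compact_op_bounded_clinear)

lemma bounded_clinear_adjoint_A: "i \<in> I \<Longrightarrow> bounded_clinear (adjoint (A i))"
  using bounded_clinear_adjoint bounded_clinear_A by blast

lemma A_commute: "i \<in> I \<Longrightarrow> j \<in> I \<Longrightarrow> A i (A j x) = A j (A i x)"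
  using commute[of i j] by (metis comp_apply)

lemma has_sum_cinner_A: "((\<lambda>i. cinner (A i y) (A i x)) has_sum cinner y x) I"
proof -
  have "((\<lambda>i. cinner y (adjoint (A i) (A i x))) has_sum cinner y x) I"
    by (rule has_sum_bounded_linear[OF bounded_linear_cinner_right sum_one])
  then show ?thesis
    by (rule has_sum_cong[THEN iffD1, rotated]) (simp add: cinner_adjoint bounded_clinear_A)
qed

lemma has_sum_norm_A: "((\<lambda>i. (norm (A i x))^2) has_sum (norm x)^2) I"
  using has_sum_Re[OF has_sum_cinner_A[of x x]] by (simp add: power2_norm_eq_cinner)

definition joint_eigenspace :: "('i \<Rightarrow> complex) \<Rightarrow> 'a set" where
  "joint_eigenspace l = {x. \<forall>i\<in>I. A i x = l i *\<^sub>C x}"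

lemma csubspace_joint_eigenspace: "csubspace (joint_eigenspace l)"
  unfolding joint_eigenspace_def csubspace_def
  by (simp add: bounded_clinear_A bounded_clinear_add bounded_clinear_zero bounded_clinear_scaleC
      scaleC_add_right scaleC_scaleC mult.commute)

lemma joint_eigenvalues_has_sum:
  assumes x: "x \<in> joint_eigenspace l" "x \<noteq> 0"
  shows "((\<lambda>i. (cmod (l i))^2) has_sum 1) I"
proof -
  have "(norm (A i x))^2 = (cmod (l i))^2 * (norm x)^2" if "i \<in> I" for i
    using x(1) that by (simp add: joint_eigenspace_def norm_scaleC power_mult_distrib)
  then have "((\<lambda>i. (cmod (l i))^2 * (norm x)^2) has_sum (norm x)^2) I"
    using has_sum_norm_A[of x] has_sum_cong[of I "\<lambda>i. (norm (A i x))^2"] by simp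
  from has_sum_cmult_left[OF this, of "1 / (norm x)^2"] show ?thesis
    using x(2) by simp
qed

lemma has_sum_cinner_adjoint_image:
  assumes x: "x \<in> joint_eigenspace l" and j: "j \<in> I"
  defines "w \<equiv> adjoint (A j) x"
  shows "((\<lambda>i. cinner (l i *\<^sub>C w) (A i w)) has_sum complex_of_real ((norm w)^2)) I"
proof -
  have "((\<lambda>i. cinner (adjoint (A i) (A i x)) (A j w)) has_sum cinner x (A j w)) I"
    by (rule has_sum_bounded_linear[OF bounded_linear_cinner_left sum_one])
  moreover have "cinner x (A j w) = complex_of_real ((norm w)^2)"
    by (simp add: w_def adjoint_cinner[OF bounded_clinear_A[OF j], symmetric]
        cinner_self_eq_power2_norm)
  moreover have "cinner (adjoint (A i) (A i x)) (A j w) = cinner (l i *\<^sub>C w) (A i w)"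
    if i: "i \<in> I" for i
  proof -
    have "cinner (l i *\<^sub>C w) (A i w) = cnj (l i) * cinner x (A j (A i w))"
      by (simp add: cinner_scaleC_left w_def adjoint_cinner[OF bounded_clinear_A[OF j]])
    also have "\<dots> = cnj (l i) * cinner (adjoint (A i) x) (A j w)"
      by (simp add: A_commute[OF j i] adjoint_cinner[OF bounded_clinear_A[OF i]])
    also have "\<dots> = cinner (adjoint (A i) (l i *\<^sub>C x)) (A j w)"
      by (simp add: bounded_clinear_scaleC[OF bounded_clinear_adjoint_A[OF i]] cinner_scaleC_left)
    also have "l i *\<^sub>C x = A i x" using x i by (simp add: joint_eigenspace_def)
    finally show ?thesis by simp
  qed
  ultimately show ?thesis
    using has_sum_cong[of I "\<lambda>i. cinner (adjoint (A i) (A i x)) (A j w)"] by simp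
qed

text \<open>For w = A_j^* x, the identity sum_i A_i^* A_i = 1 makes each of the sums over i of
  |A_i w|^2, Re <l_i w, A_i w> and |l_i|^2 |w|^2 equal to |w|^2, so the sum of
  |A_i w - l_i w|^2 vanishes.\<close>

lemma adjoint_maps_joint_eigenspace:
  assumes x: "x \<in> joint_eigenspace l" and j: "j \<in> I"
  shows "adjoint (A j) x \<in> joint_eigenspace l"
proof (cases "x = 0")
  case True
  then show ?thesis
    using csubspace_joint_eigenspace bounded_clinear_zero[OF bounded_clinear_adjoint_A[OF j]]
    by (simp add: csubspace_0)
next
  case False
  define w where "w = adjoint (A j) x"
  have "((\<lambda>i. (norm (A i w))^2 - 2 * Re (cinner (l i *\<^sub>C w) (A i w)) + (cmod (l i))^2 * (norm w)^2)
      has_sum ((norm w)^2 - 2 * (norm w)^2 + (norm w)^2)) I"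
    using has_sum_Re[OF has_sum_cinner_adjoint_image[OF x j]]
      has_sum_cmult_left[OF joint_eigenvalues_has_sum[OF x False], of "(norm w)^2"]
    by (intro has_sum_add has_sum_diff has_sum_norm_A has_sum_cmult_right) (simp_all add: w_def)
  moreover have "(norm (A i w - l i *\<^sub>C w))^2 =
      (norm (A i w))^2 - 2 * Re (cinner (l i *\<^sub>C w) (A i w)) + (cmod (l i))^2 * (norm w)^2" for i
    by (simp add: power2_norm_diff norm_scaleC power_mult_distrib Re_cinner_commute)
  ultimately have "((\<lambda>i. (norm (A i w - l i *\<^sub>C w))^2) has_sum 0) I" by simp
  then have "(norm (A i w - l i *\<^sub>C w))^2 = 0" if "i \<in> I" for i
    by (rule nonneg_has_sum_le_0D) (simp_all add: that)
  then show ?thesis by (simp add: w_def joint_eigenspace_def)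
qed

lemma adjoint_joint_eigenvector:
  assumes x: "x \<in> joint_eigenspace l" and j: "j \<in> I"
  shows "adjoint (A j) x = cnj (l j) *\<^sub>C x"
proof -
  define u where "u = adjoint (A j) x - cnj (l j) *\<^sub>C x"
  have "u \<in> joint_eigenspace l"
    using csubspace_joint_eigenspace adjoint_maps_joint_eigenspace[OF x j] x
    by (simp add: u_def csubspace_diff csubspace_scaleC)
  then have "cinner (adjoint (A j) x) u = l j * cinner x u"
    using j by (simp add: adjoint_cinner[OF bounded_clinear_A[OF j]] joint_eigenspace_def
        cinner_scaleC_right)
  then have "cinner u u = 0"
    by (simp add: u_def cinner_diff_left cinner_scaleC_left)
  then show ?thesis by (simp add: u_def)
qed

definition joint_eigenvectors :: "'a set" where
  "joint_eigenvectors = {x. \<exists>l. x \<in> joint_eigenspace l}"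

definition normal_part :: "'a set" where
  "normal_part = \<Inter>{S. closed_csubspace S \<and> joint_eigenvectors \<subseteq> S}"

definition quasinilpotent_part :: "'a set" where
  "quasinilpotent_part = {y. \<forall>g\<in>joint_eigenvectors. cinner g y = 0}"

lemma closed_csubspace_normal_part: "closed_csubspace normal_part"
  unfolding normal_part_def by (rule closed_csubspace_Inter) auto

lemma joint_eigenvectors_subset_normal_part: "joint_eigenvectors \<subseteq> normal_part"
  unfolding normal_part_def by auto

lemma normal_part_least: "closed_csubspace S \<Longrightarrow> joint_eigenvectors \<subseteq> S \<Longrightarrow> normal_part \<subseteq> S"
  unfolding normal_part_def by auto

lemma normal_part_invariant_under:
  assumes T: "bounded_clinear T" and eigen: "\<And>g. g \<in> joint_eigenvectors \<Longrightarrow> T g \<in> normal_part"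
  shows "T ` normal_part \<subseteq> normal_part"
  using normal_part_least[OF closed_csubspace_vimage[OF T closed_csubspace_normal_part]] eigen
  by blast

lemma normal_part_invariant:
  assumes i: "i \<in> I"
  shows "A i ` normal_part \<subseteq> normal_part"
proof (rule normal_part_invariant_under[OF bounded_clinear_A[OF i]])
  fix g assume g: "g \<in> joint_eigenvectors"
  then obtain l where "g \<in> joint_eigenspace l" by (auto simp: joint_eigenvectors_def)
  then have "A i g = l i *\<^sub>C g" using i by (simp add: joint_eigenspace_def)
  then show "A i g \<in> normal_part"
    using g joint_eigenvectors_subset_normal_part closed_csubspace_normal_part
    by (auto simp: closed_csubspace_def csubspace_scaleC)
qed

lemma normal_part_adjoint_invariant:
  assumes i: "i \<in> I"
  shows "adjoint (A i) ` normal_part \<subseteq> normal_part"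
proof (rule normal_part_invariant_under[OF bounded_clinear_adjoint_A[OF i]])
  fix g assume g: "g \<in> joint_eigenvectors"
  then obtain l where "g \<in> joint_eigenspace l" by (auto simp: joint_eigenvectors_def)
  then have "adjoint (A i) g = cnj (l i) *\<^sub>C g" using i by (rule adjoint_joint_eigenvector)
  then show "adjoint (A i) g \<in> normal_part"
    using g joint_eigenvectors_subset_normal_part closed_csubspace_normal_part
    by (auto simp: closed_csubspace_def csubspace_scaleC)
qed

lemma normal_part_commute_adjoint:
  assumes i: "i \<in> I" and x: "x \<in> normal_part"
  shows "A i (adjoint (A i) x) = adjoint (A i) (A i x)"
proof -
  have "g \<in> {x. A i (adjoint (A i) x) = adjoint (A i) (A i x)}" if g: "g \<in> joint_eigenvectors" for g
  proof -
    from g obtain l where g: "g \<in> joint_eigenspace l" by (auto simp: joint_eigenvectors_def)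
    then have "A i g = l i *\<^sub>C g" using i by (simp add: joint_eigenspace_def)
    then show ?thesis
      using adjoint_joint_eigenvector[OF g i]
      by (simp add: bounded_clinear_scaleC[OF bounded_clinear_A[OF i]]
          bounded_clinear_scaleC[OF bounded_clinear_adjoint_A[OF i]] scaleC_scaleC mult.commute)
  qed
  moreover have "closed_csubspace {x. A i (adjoint (A i) x) = adjoint (A i) (A i x)}"
    using bounded_clinear_compose[OF bounded_clinear_A[OF i] bounded_clinear_adjoint_A[OF i]]
      bounded_clinear_compose[OF bounded_clinear_adjoint_A[OF i] bounded_clinear_A[OF i]]
    by (rule closed_csubspace_equalizer)
  ultimately have "normal_part \<subseteq> {x. A i (adjoint (A i) x) = adjoint (A i) (A i x)}"
    by (intro normal_part_least) auto
  then show ?thesis using x by blast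
qed

lemma normal_on_normal_part: "i \<in> I \<Longrightarrow> normal_on normal_part (A i)"
  unfolding normal_on_def
  by (intro exI[of _ "adjoint (A i)"])
    (simp add: normal_part_adjoint_invariant cinner_adjoint bounded_clinear_A normal_part_commute_adjoint)

lemma closed_csubspace_quasinilpotent_part: "closed_csubspace quasinilpotent_part"
  unfolding quasinilpotent_part_def by (rule closed_csubspace_orthogonal)

lemma quasinilpotent_part_invariant: "i \<in> I \<Longrightarrow> A i ` quasinilpotent_part \<subseteq> quasinilpotent_part"
  by (auto simp: quasinilpotent_part_def joint_eigenvectors_def adjoint_cinner[symmetric]
      bounded_clinear_A adjoint_joint_eigenvector cinner_scaleC_left)

lemma quasinilpotent_part_orthogonal:
  assumes x: "x \<in> quasinilpotent_part" and y: "y \<in> normal_part"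
  shows "cinner x y = 0"
proof -
  have "normal_part \<subseteq> {y. \<forall>x\<in>quasinilpotent_part. cinner x y = 0}"
  proof (rule normal_part_least)
    show "closed_csubspace {y. \<forall>x\<in>quasinilpotent_part. cinner x y = 0}"
      by (rule closed_csubspace_orthogonal)
    show "joint_eigenvectors \<subseteq> {y. \<forall>x\<in>quasinilpotent_part. cinner x y = 0}"
      by (auto simp: quasinilpotent_part_def intro: cinner_zero_commute[THEN iffD1])
  qed
  then show ?thesis using x y by blast
qed

lemma quasinilpotent_part_plus_normal_part: "\<exists>x\<in>quasinilpotent_part. \<exists>y\<in>normal_part. z = x + y"
proof -
  obtain p where p: "p \<in> normal_part" "\<And>m. m \<in> normal_part \<Longrightarrow> cinner m (z - p) = 0"
    using orthogonal_projection_exists[OF closed_csubspace_normal_part] by blast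
  then have "z - p \<in> quasinilpotent_part"
    using joint_eigenvectors_subset_normal_part by (auto simp: quasinilpotent_part_def)
  then show ?thesis using p(1) by force
qed

text \<open>An eigenspace of A_i for mu \<noteq> 0 inside the quasinilpotent part is finite-dimensional and
  invariant under the whole commuting family; a common eigenvector in it would be a joint
  eigenvector orthogonal to itself.\<close>

lemma quasinilpotent_part_no_eigenvector:
  assumes i: "i \<in> I" and mu: "mu \<noteq> 0" and y: "y \<in> quasinilpotent_part" "A i y = mu *\<^sub>C y"
  shows "y = 0"
proof (rule ccontr)
  assume "y \<noteq> 0"
  define K where "K = {v \<in> quasinilpotent_part. A i v = mu *\<^sub>C v}"
  have K: "csubspace K"
    using closed_csubspace_quasinilpotent_part unfolding K_def closed_csubspace_def csubspace_def
    by (simp add: bounded_clinear_A[OF i] bounded_clinear_add bounded_clinear_scaleC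
        bounded_clinear_zero scaleC_add_right scaleC_scaleC mult.commute)
  have "\<exists>B. finite B \<and> K \<subseteq> cvs.span B"
    by (rule compact_op_eigenspace_finite_dim[OF compact[OF i] mu K]) (simp add: K_def)
  then obtain B where B: "finite B" "K \<subseteq> cvs.span B" by blast
  have lin: "clinear (A j)" if "j \<in> I" for j
    using bounded_clinear_A[OF that] by (rule bounded_clinear_clinear)
  have K_inv: "A j x \<in> K" if j: "j \<in> I" and x: "x \<in> K" for j x
  proof -
    have "A j x \<in> quasinilpotent_part" using quasinilpotent_part_invariant[OF j] x by (auto simp: K_def)
    moreover have "A i (A j x) = mu *\<^sub>C A j x"
      using x A_commute[OF i j] by (simp add: K_def bounded_clinear_scaleC[OF bounded_clinear_A[OF j]])
    ultimately show ?thesis by (simp add: K_def)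
  qed
  have "y \<in> K" using y by (simp add: K_def)
  obtain w where w: "w \<in> K" "w \<noteq> 0" "\<forall>j\<in>I. \<exists>c. A j w = c *\<^sub>C w"
    using commuting_common_eigenvector[where A = A and I = I, OF lin A_commute K B(2,1) K_inv
        \<open>y \<in> K\<close> \<open>y \<noteq> 0\<close>]
    by blast
  from bchoice[OF w(3)] obtain l where "\<forall>j\<in>I. A j w = l j *\<^sub>C w" by blast
  then have "w \<in> joint_eigenvectors"
    by (auto simp: joint_eigenvectors_def joint_eigenspace_def)
  moreover have "w \<in> quasinilpotent_part" using w(1) by (simp add: K_def)
  ultimately have "cinner w w = 0" by (simp add: quasinilpotent_part_def)
  then show False using w(2) by simp
qed

lemma quasinilpotent_on_quasinilpotent_part:
  assumes i: "i \<in> I"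
  shows "quasinilpotent_on quasinilpotent_part (A i)"
  unfolding quasinilpotent_on_def spectrum_on_def
proof
  fix l assume "l \<in> {l. \<not> bij_betw (\<lambda>x. A i x - l *\<^sub>C x) quasinilpotent_part quasinilpotent_part}"
  then have not_bij: "\<not> bij_betw (\<lambda>x. A i x - l *\<^sub>C x) quasinilpotent_part quasinilpotent_part"
    by simp
  show "l \<in> {0}"
  proof (rule ccontr)
    assume "l \<notin> {0}"
    then have l: "l \<noteq> 0" by simp
    have "inj_on (\<lambda>x. A i x - l *\<^sub>C x) quasinilpotent_part"
    proof (rule inj_onI)
      fix x y assume xy: "x \<in> quasinilpotent_part" "y \<in> quasinilpotent_part"
        "A i x - l *\<^sub>C x = A i y - l *\<^sub>C y"
      have "x - y \<in> quasinilpotent_part"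
        using xy closed_csubspace_quasinilpotent_part by (simp add: closed_csubspace_def csubspace_diff)
      moreover have "A i (x - y) = l *\<^sub>C (x - y)"
        using xy(3)
        by (simp add: bounded_clinear_diff[OF bounded_clinear_A[OF i]] scaleC_diff_right algebra_simps)
      ultimately have "x - y = 0" by (rule quasinilpotent_part_no_eigenvector[OF i l])
      then show "x = y" by simp
    qed
    moreover have "(\<lambda>x. A i x - l *\<^sub>C x) ` quasinilpotent_part = quasinilpotent_part"
      using compact_op_shift_surj[OF compact[OF i] closed_csubspace_quasinilpotent_part
          quasinilpotent_part_invariant[OF i] l] quasinilpotent_part_no_eigenvector[OF i l]
      by blast
    ultimately show False using not_bij by (simp add: bij_betw_def)
  qed
qed

end

theorem theorem1p6:
  fixes A :: "'i \<Rightarrow> 'a::chilbert_space \<Rightarrow> 'a" and I :: "'i set"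
  assumes compact: "\<And>i. i \<in> I \<Longrightarrow> compact_op (A i)"
    and commute: "\<And>i j. i \<in> I \<Longrightarrow> j \<in> I \<Longrightarrow> A i \<circ> A j = A j \<circ> A i"
    and sum_one: "\<And>x. ((\<lambda>i. adjoint (A i) (A i x)) has_sum x) I"
  shows "\<exists>Hqn Hn. closed_csubspace Hqn \<and> closed_csubspace Hn
           \<and> (\<forall>x\<in>Hqn. \<forall>y\<in>Hn. cinner x y = 0)
           \<and> (\<forall>z. \<exists>x\<in>Hqn. \<exists>y\<in>Hn. z = x + y)
           \<and> (\<forall>i\<in>I. A i ` Hqn \<subseteq> Hqn \<and> A i ` Hn \<subseteq> Hn)
           \<and> (\<forall>i\<in>I. normal_on Hn (A i))
           \<and> (\<forall>i\<in>I. quasinilpotent_on Hqn (A i))"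
proof -
  interpret compact_spherical_isometry A I
    using assms by unfold_locales
  show ?thesis
    by (intro exI[of _ quasinilpotent_part] exI[of _ normal_part] conjI ballI allI)
      (simp_all add: closed_csubspace_quasinilpotent_part closed_csubspace_normal_part
        quasinilpotent_part_orthogonal quasinilpotent_part_plus_normal_part
        quasinilpotent_part_invariant normal_part_invariant normal_on_normal_part
        quasinilpotent_on_quasinilpotent_part)
qed

end
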